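(* Let $m\ge1$, $0=c_1<c_2<\cdots<c_m$ be fixed, and for $x\in\mathbb{R}$ let $\vec t=(t_1,\dots,t_m)=(x,c_2+x,\dots,c_m+x)$. Let $\hat\omega_0:=1$ and $\hat\omega_1,\dots,\hat\omega_m\ge0$, let $\omega_k:=\hat\omega_k-\hat\omega_{k-1}$ ($k=1,\dots,m$), and consider the weight $w(s)={\rm e}^{-s^2}\big(1+\sum_{k=1}^m\omega_k\theta(s-t_k)\big)$ on $\mathbb{R}$. Let $n\ge1$, and let $a_k(x),b_k(x)$ ($k=1,\dots,m$) be the functions defined in the context from the Lax matrix of the associated Riemann–Hilbert problem. Then for $k=1,\dots,m$, $$R_{n,k}(\vec t)=\frac{a_kb_k^2}{\sum_{j=1}^ma_jb_j+n},\qquad r_{n,k}(\vec t)=a_kb_k,$$ equivalently (when the denominators are nonzero) $$a_k=\frac{r_{n,k}^2}{R_{n,k}\big(\sum_{j=1}^mr_{n,j}+n\big)},\qquad b_k=\frac{R_{n,k}}{r_{n,k}}\Big(\sum_{j=1}^mr_{n,j}+n\Big),$$ and moreover $a_k(x)=\frac12R_{n-1,k}(\vec t)$.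
   Context: $\theta(y)=1$ for $y>0$ and $0$ otherwise. $P_j(z)$ is the monic degree-$j$ polynomial orthogonal w.r.t. $w$ on $\mathbb{R}$, $\int P_jP_kw\,ds=h_k\delta_{jk}$, $h_k>0$. $R_{j,k}:=\omega_k{\rm e}^{-t_k^2}P_j(t_k)^2/h_j$ and $r_{n,k}:=\omega_k{\rm e}^{-t_k^2}P_n(t_k)P_{n-1}(t_k)/h_{n-1}$. Define for $z\notin\mathbb{R}$ the $2\times2$ matrix $$Y(z)=\begin{pmatrix}P_n(z)&\frac{1}{2\pi i}\int_{\mathbb{R}}\frac{P_n(s)w(s)}{s-z}ds\\ -\frac{2\pi i}{h_{n-1}}P_{n-1}(z)&-\frac{1}{h_{n-1}}\int_{\mathbb{R}}\frac{P_{n-1}(s)w(s)}{s-z}ds\end{pmatrix},$$ and $\Phi(z;x):=\sigma_1{\rm e}^{\frac{x^2}{2}\sigma_3}Y(z+x){\rm e}^{-\frac12(z+x)^2\sigma_3}\sigma_1$, where $\sigma_1=\begin{pmatrix}0&1\\1&0\end{pmatrix}$, $\sigma_3=\begin{pmatrix}1&0\\0&-1\end{pmatrix}$. It is known that $\Phi$ satisfies $\partial_z\Phi=A(z;x)\Phi$ with $$A(z;x)=(z+x)\sigma_3+A_\infty(x)+\sum_{k=1}^m\frac{A_k(x)}{z-c_k},$$ $$A_\infty=\begin{pmatrix}0&y\\-2\big(\sum_{k}a_kb_k+n\big)/y&0\end{pmatrix},\qquad A_k=\begin{pmatrix}a_kb_k&a_ky\\-a_kb_k^2/y&-a_kb_k\end{pmatrix},$$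 for scalar functions $y(x)$, $a_k(x)$, $b_k(x)$; these define $a_k,b_k$ (namely $y=(A_\infty)_{12}$, $a_k=(A_k)_{12}/y$, $a_kb_k=(A_k)_{11}$). *)

theory Defs
  imports "HOL-Analysis.Analysis" "HOL-Computational_Algebra.Polynomial"
begin

definition theta :: "real \<Rightarrow> real" where
  "theta y = (if y > 0 then 1 else 0)"

definition tpt :: "(nat \<Rightarrow> real) \<Rightarrow> real \<Rightarrow> nat \<Rightarrow> real" where
  "tpt c x k = c k + x"

definition jump :: "(nat \<Rightarrow> real) \<Rightarrow> nat \<Rightarrow> real" where
  "jump wh k = wh k - wh (k - 1)"

definition weight :: "nat \<Rightarrow> (nat \<Rightarrow> real) \<Rightarrow> (nat \<Rightarrow> real) \<Rightarrow> real \<Rightarrow> real \<Rightarrow> real" where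
  "weight m c wh x s = exp (- s\<^sup>2) * (1 + (\<Sum>k=1..m. jump wh k * theta (s - tpt c x k)))"

definition OP :: "(real \<Rightarrow> real) \<Rightarrow> nat \<Rightarrow> real poly" where
  "OP w j = (THE p. degree p = j \<and> lead_coeff p = 1 \<and>
      (\<forall>i<j. (\<lambda>s. poly p s * s ^ i * w s) \<in> borel_measurable lborel \<and>
             integrable lborel (\<lambda>s. poly p s * s ^ i * w s) \<and>
             (LINT s|lborel. poly p s * s ^ i * w s) = 0))"

definition hnorm :: "(real \<Rightarrow> real) \<Rightarrow> nat \<Rightarrow> real" where
  "hnorm w j = (LINT s|lborel. (poly (OP w j) s)\<^sup>2 * w s)"

definition cpoly :: "real poly \<Rightarrow> complex \<Rightarrow> complex" where
  "cpoly p z = poly (map_poly complex_of_real p) z"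

definition RR :: "nat \<Rightarrow> (nat \<Rightarrow> real) \<Rightarrow> (nat \<Rightarrow> real) \<Rightarrow> real \<Rightarrow> nat \<Rightarrow> nat \<Rightarrow> real" where
  "RR m c wh x j k = (let w = weight m c wh x; t = tpt c x k in
     jump wh k * exp (- t\<^sup>2) * (poly (OP w j) t)\<^sup>2 / hnorm w j)"

definition rr :: "nat \<Rightarrow> (nat \<Rightarrow> real) \<Rightarrow> (nat \<Rightarrow> real) \<Rightarrow> real \<Rightarrow> nat \<Rightarrow> nat \<Rightarrow> real" where
  "rr m c wh x n k = (let w = weight m c wh x; t = tpt c x k in
     jump wh k * exp (- t\<^sup>2) * poly (OP w n) t * poly (OP w (n - 1)) t / hnorm w (n - 1))"

definition mat2 :: "complex \<Rightarrow> complex \<Rightarrow> complex \<Rightarrow> complex \<Rightarrow> complex^2^2" where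
  "mat2 a b c d = (\<chi> i j. if i = 1 then (if j = 1 then a else b) else (if j = 1 then c else d))"

definition sigma1 :: "complex^2^2" where "sigma1 = mat2 0 1 1 0"

text \<open>exp(alpha sigma_3) = diag(exp alpha, exp(-alpha)).\<close>
definition expsig3 :: "complex \<Rightarrow> complex^2^2" where
  "expsig3 \<alpha> = mat2 (exp \<alpha>) 0 0 (exp (- \<alpha>))"

definition cauchyT :: "(real \<Rightarrow> real) \<Rightarrow> real poly \<Rightarrow> complex \<Rightarrow> complex" where
  "cauchyT w p z = (LINT s|lborel. complex_of_real (poly p s * w s) / (complex_of_real s - z))"

definition Ymat :: "(real \<Rightarrow> real) \<Rightarrow> nat \<Rightarrow> complex \<Rightarrow> complex^2^2" where
  "Ymat w n z = mat2
     (cpoly (OP w n) z)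
     (cauchyT w (OP w n) z / (2 * pi * \<i>))
     (- (2 * pi * \<i>) / complex_of_real (hnorm w (n - 1)) * cpoly (OP w (n - 1)) z)
     (- cauchyT w (OP w (n - 1)) z / complex_of_real (hnorm w (n - 1)))"

definition Phi :: "nat \<Rightarrow> (nat \<Rightarrow> real) \<Rightarrow> (nat \<Rightarrow> real) \<Rightarrow> nat \<Rightarrow> complex \<Rightarrow> real \<Rightarrow> complex^2^2" where
  "Phi m c wh n z x =
     sigma1 ** expsig3 (complex_of_real (x\<^sup>2 / 2)) **
     Ymat (weight m c wh x) n (z + complex_of_real x) **
     expsig3 (- (z + complex_of_real x)\<^sup>2 / 2) ** sigma1"

definition Alax :: "nat \<Rightarrow> (nat \<Rightarrow> real) \<Rightarrow> nat \<Rightarrow> complex \<Rightarrow> (nat \<Rightarrow> complex) \<Rightarrow> (nat \<Rightarrow> complex)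
     \<Rightarrow> complex \<Rightarrow> real \<Rightarrow> complex^2^2" where
  "Alax m c n y a b z x =
     mat2 (z + complex_of_real x) 0 0 (- (z + complex_of_real x))
     + mat2 0 y (- 2 * ((\<Sum>k=1..m. a k * b k) + of_nat n) / y) 0
     + (\<Sum>k=1..m. mat2 (a k * b k / (z - complex_of_real (c k))) (a k * y / (z - complex_of_real (c k)))
               (- a k * (b k)\<^sup>2 / y / (z - complex_of_real (c k))) (- a k * b k / (z - complex_of_real (c k))))"

end

(*
  The entries of \<Phi> are, up to Gaussian factors, P_n, P_{n-1} and their Cauchy transforms
  C P (\<zeta>) = \<integral> P w / (s - \<zeta>), so \<partial>\<^sub>z \<Phi> = A \<Phi> amounts to four scalar differential
  identities. As tr A = 0, det \<Phi> is constant in the upper half plane, and the expansions of the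
  Cauchy transforms at i\<infinity>, governed by orthogonality, give det \<Phi> = 1; the same expansions in
  the (1,2) and (2,1) identities determine y and \<Sum> a_j b_j + n = 2 h_n / h_{n-1}.

  Near c_k the weight jumps by \<omega>_k at t_k, so \<epsilon> (C P)'(t_k + i\<epsilon>) tends to
  i \<omega>_k e^{-t_k^2} P(t_k) while \<epsilon> C P(t_k + i\<epsilon>) tends to 0. Multiplying the identities by
  z - c_k and letting z approach c_k vertically matches the residues of A at c_k with these
  boundary values; together with det \<Phi> = 1 this yields a_k = R_{n-1,k} / 2 and
  a_k b_k = r_{n,k}, from which the remaining formulas follow algebraically.
*)

theory Submission
  imports Defs "HOL-Probability.Distributions"
begin

lemma integrable_power_gauss: "integrable lborel (\<lambda>s::real. s ^ k * exp (- s\<^sup>2))"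
proof -
  have "integrable lborel (\<lambda>s. sqrt pi * (normal_density 0 (1 / sqrt 2) s * s ^ k))"
    using integrable_normal_moment[of "1 / sqrt 2" 0 k] by (intro integrable_mult_right) simp
  also have "(\<lambda>s. sqrt pi * (normal_density 0 (1 / sqrt 2) s * s ^ k)) = (\<lambda>s::real. s ^ k * exp (- s\<^sup>2))"
    by (auto simp: normal_density_def power2_eq_square real_sqrt_mult)
  finally show ?thesis .
qed

lemma integrable_poly_gauss: "integrable lborel (\<lambda>s::real. poly P s * exp (- s\<^sup>2))"
proof -
  have "(\<lambda>s. poly P s * exp (- s\<^sup>2)) = (\<lambda>s. \<Sum>i\<le>degree P. coeff P i * (s ^ i * exp (- s\<^sup>2)))"
    by (auto simp: poly_altdef sum_distrib_right mult.assoc)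
  then show ?thesis
    using integrable_power_gauss by (auto intro!: integrable_sum integrable_mult_right)
qed

lemma poly_borel_measurable[measurable]: "poly (P :: real poly) \<in> borel_measurable borel"
  using continuous_on_poly[OF continuous_on_id, of UNIV P]
  by (intro borel_measurable_continuous_onI) (simp add: id_def)

locale gauss_weight =
  fixes w :: "real \<Rightarrow> real" and B x0 :: real
  assumes weight_measurable: "w \<in> borel_measurable lborel"
    and weight_gauss_bound: "\<And>s. \<bar>w s\<bar> \<le> B * exp (- s\<^sup>2)"
    and weight_nonneg: "\<And>s. 0 \<le> w s"
    and weight_pos: "\<And>s. s < x0 \<Longrightarrow> 0 < w s"
begin

lemma weight_borel_measurable[measurable]: "w \<in> borel_measurable borel"
  using weight_measurable by simp

lemma gauss_bound_nonneg: "0 \<le> B"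
  using weight_gauss_bound[of 0] by simp

lemma integrable_poly_weight: "integrable lborel (\<lambda>s. poly P s * w s)"
proof (rule Bochner_Integration.integrable_bound)
  show "integrable lborel (\<lambda>s. B * \<bar>poly P s * exp (- s\<^sup>2)\<bar>)"
    using integrable_poly_gauss[of P] by (intro integrable_mult_right integrable_abs)
  show "AE s in lborel. norm (poly P s * w s) \<le> norm (B * \<bar>poly P s * exp (- s\<^sup>2)\<bar>)"
  proof (intro AE_I2)
    fix s
    have "\<bar>poly P s * w s\<bar> \<le> \<bar>poly P s\<bar> * (B * exp (- s\<^sup>2))"
      using weight_gauss_bound[of s] by (simp add: abs_mult mult_left_mono)
    then show "norm (poly P s * w s) \<le> norm (B * \<bar>poly P s * exp (- s\<^sup>2)\<bar>)"
      using gauss_bound_nonneg by (simp add: abs_mult mult.left_commute)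
  qed
qed measurable

lemma integrable_abs_poly_weight: "integrable lborel (\<lambda>s. \<bar>poly P s * w s\<bar>)"
  using integrable_poly_weight by (rule integrable_abs)

lemma integrable_poly_poly_weight: "integrable lborel (\<lambda>s. poly P s * poly Q s * w s)"
  using integrable_poly_weight[of "P * Q"] by simp

lemma integrable_poly_power_weight: "integrable lborel (\<lambda>s. poly P s * s ^ i * w s)"
  using integrable_poly_weight[of "P * monom 1 i"] by (simp add: poly_monom)

definition moment :: "real poly \<Rightarrow> nat \<Rightarrow> real" where
  "moment p i = (LINT s|lborel. poly p s * s ^ i * w s)"

definition pinner :: "real poly \<Rightarrow> real poly \<Rightarrow> real" where
  "pinner p r = (LINT s|lborel. poly p s * poly r s * w s)"

definition orth_below :: "nat \<Rightarrow> real poly \<Rightarrow> bool" where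
  "orth_below j p \<longleftrightarrow> (\<forall>i<j. moment p i = 0)"

lemma pinner_eq_moments: "pinner p r = (\<Sum>i\<le>degree r. coeff r i * moment p i)"
proof -
  have "pinner p r = (LINT s|lborel. (\<Sum>i\<le>degree r. coeff r i * (poly p s * s ^ i * w s)))"
    unfolding pinner_def
    by (intro Bochner_Integration.integral_cong)
       (auto simp: poly_altdef[of r] sum_distrib_left sum_distrib_right mult_ac)
  also have "\<dots> = (\<Sum>i\<le>degree r. coeff r i * moment p i)"
    unfolding moment_def
    by (subst Bochner_Integration.integral_sum)
       (auto intro!: integrable_mult_right integrable_poly_power_weight)
  finally show ?thesis .
qed

lemma pinner_commute: "pinner p r = pinner r p"
  unfolding pinner_def by (simp add: mult_ac)

lemma pinner_diff_left: "pinner (p - q) r = pinner p r - pinner q r"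
  unfolding pinner_def using integrable_poly_poly_weight[of p r] integrable_poly_poly_weight[of q r]
  by (simp add: left_diff_distrib)

lemma pinner_add_left: "pinner (p + q) r = pinner p r + pinner q r"
  unfolding pinner_def using integrable_poly_poly_weight[of p r] integrable_poly_poly_weight[of q r]
  by (simp add: distrib_right)

lemma pinner_smult_left: "pinner (smult a p) r = a * pinner p r"
  unfolding pinner_def by (simp add: mult_ac)

lemma pinner_sum_left: "pinner (\<Sum>i\<in>A. f i) r = (\<Sum>i\<in>A. pinner (f i) r)"
proof (induction A rule: infinite_finite_induct)
  case (insert a A)
  then show ?case by (simp add: pinner_add_left)
qed (simp_all add: pinner_def)

lemma moment_diff: "moment (p - q) i = moment p i - moment q i"
  unfolding moment_def using integrable_poly_power_weight[of p i] integrable_poly_power_weight[of q i]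
  by (simp add: left_diff_distrib)

lemma moment_monom_mult: "moment (monom 1 d * p) i = moment p (d + i)"
  unfolding moment_def by (simp add: poly_monom power_add mult_ac)

lemma pinner_eq_0_if_orth_below: "orth_below j p \<Longrightarrow> degree r < j \<Longrightarrow> pinner p r = 0"
  unfolding orth_below_def pinner_eq_moments by (intro sum.neutral) auto

lemma pinner_self_pos:
  assumes "r \<noteq> 0"
  shows "0 < pinner r r"
proof (rule ccontr)
  assume "\<not> 0 < pinner r r"
  moreover have "0 \<le> pinner r r"
    unfolding pinner_def using weight_nonneg by (intro Bochner_Integration.integral_nonneg) auto
  ultimately have "pinner r r = 0" by linarith
  then have "AE s in lborel. poly r s * poly r s * w s = 0"
    unfolding pinner_def using integrable_poly_poly_weight[of r r] weight_nonneg
    by (subst (asm) integral_nonneg_eq_0_iff_AE) auto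
  moreover have "AE s in lborel. \<forall>z\<in>{z. poly r z = 0}. s \<noteq> z"
    using poly_roots_finite[OF assms] by (intro AE_finite_allI) (auto intro: AE_lborel_singleton)
  ultimately have "AE s in lborel. s \<notin> {x0 - 1<..<x0}"
    by eventually_elim (use weight_pos in fastforce)
  then have "{x0 - 1<..<x0} \<in> null_sets lborel"
    by (subst AE_iff_null_sets) auto
  then show False by (simp add: null_sets_def)
qed

lemma pinner_eq_0_if_orth_monic_family:
  assumes P: "\<And>l. l < j \<Longrightarrow> degree (P l) = l \<and> lead_coeff (P l) = 1"
    and orth: "\<And>l. l < j \<Longrightarrow> pinner p (P l) = 0"
    and "degree r < j"
  shows "pinner p r = 0"
  using \<open>degree r < j\<close>
proof (induction "degree r" arbitrary: r rule: less_induct)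
  case less
  define d where "d = degree r"
  define r' where "r' = r - smult (lead_coeff r) (P d)"
  have Pd: "degree (P d) = d" "lead_coeff (P d) = 1"
    using P[of d] less.prems d_def by auto
  have "pinner p r' = 0"
  proof (cases "r' = 0")
    case False
    have "degree r' \<le> d" "coeff r' d = 0"
      unfolding r'_def using Pd d_def
      by (auto intro!: degree_diff_le intro: order.trans[OF degree_smult_le])
    then have "degree r' < d"
      using False by (metis le_neq_implies_less leading_coeff_0_iff)
    then show ?thesis using less d_def by auto
  qed (simp add: pinner_def)
  moreover have "r = r' + smult (lead_coeff r) (P d)" unfolding r'_def by simp
  ultimately show ?case
    using orth less.prems unfolding d_def
    by (metis pinner_commute pinner_add_left pinner_smult_left mult_zero_right add_0)
qed

lemma pinner_monic_orth_family:
  assumes P: "\<And>i. i < j \<Longrightarrow> degree (P i) = i \<and> orth_below i (P i)"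
    and "i < j" "l < j" "i \<noteq> l"
  shows "pinner (P i) (P l) = 0"
proof (cases "l < i")
  case True
  then show ?thesis using P[of i] P[of l] assms(2,3) by (intro pinner_eq_0_if_orth_below) auto
next
  case False
  then show ?thesis using assms(2-4) P[of i] P[of l]
    by (metis pinner_commute pinner_eq_0_if_orth_below nat_neq_iff)
qed

lemma monic_minus_lower:
  fixes S :: "real poly"
  assumes "degree S \<le> j" "coeff S j = 0"
  shows "degree (monom 1 j - S) = j" and "lead_coeff (monom 1 j - S) = 1"
proof -
  have "degree (monom 1 j - S) \<le> j" using assms(1) by (intro degree_diff_le) (auto simp: degree_monom_le)
  moreover have "coeff (monom 1 j - S) j = 1" using assms(2) by simp
  ultimately show "degree (monom 1 j - S) = j" by (metis le_antisym le_degree zero_neq_one)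
  then show "lead_coeff (monom 1 j - S) = 1" using assms(2) by simp
qed

lemma monic_orth_below_exists: "\<exists>p. degree p = j \<and> lead_coeff p = 1 \<and> orth_below j p"
proof (induction j rule: less_induct)
  case (less j)
  then obtain P where P: "\<And>i. i < j \<Longrightarrow> degree (P i) = i \<and> lead_coeff (P i) = 1 \<and> orth_below i (P i)"
    by metis
  \<comment> \<open>Gram--Schmidt: subtract from \<open>X ^ j\<close> its projections onto the lower monic orthogonal polynomials.\<close>
  define S where "S = (\<Sum>i<j. smult (pinner (monom 1 j) (P i) / pinner (P i) (P i)) (P i))"
  define p where "p = monom 1 j - S"
  have "degree S \<le> j" unfolding S_def
    by (intro degree_sum_le) (use P in \<open>auto intro: order.trans[OF degree_smult_le]\<close>)
  moreover have "coeff S j = 0" unfolding S_def coeff_sum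
    by (intro sum.neutral) (use P in \<open>auto intro: coeff_eq_0\<close>)
  ultimately have deg_p: "degree p = j" and lc_p: "lead_coeff p = 1"
    unfolding p_def by (rule monic_minus_lower)+
  have "pinner p (P l) = 0" if "l < j" for l
  proof -
    have "P l \<noteq> 0" using P[OF that] by auto
    have "pinner S (P l) = (\<Sum>i<j. pinner (monom 1 j) (P i) / pinner (P i) (P i) * pinner (P i) (P l))"
      unfolding S_def by (simp add: pinner_sum_left pinner_smult_left)
    also have "\<dots> = pinner (monom 1 j) (P l)"
      using that pinner_self_pos[OF \<open>P l \<noteq> 0\<close>] pinner_monic_orth_family[of j P] P
      by (subst sum.remove[of _ l]) (auto intro!: sum.neutral)
    finally show ?thesis unfolding p_def by (simp add: pinner_diff_left)
  qed
  note orth_P = this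
  have "pinner p (monom 1 i) = 0" if "i < j" for i
  proof (rule pinner_eq_0_if_orth_monic_family)
    show "degree (P l) = l \<and> lead_coeff (P l) = 1" if "l < j" for l
      using P[OF that] by blast
  qed (use orth_P that in \<open>simp_all add: degree_monom_eq\<close>)
  then have "orth_below j p"
    unfolding orth_below_def moment_def pinner_def by (simp add: poly_monom)
  then show ?case using deg_p lc_p by blast
qed

lemma monic_orth_below_unique:
  assumes "degree p = j" "lead_coeff p = 1" "orth_below j p"
    and "degree q = j" "lead_coeff q = 1" "orth_below j q"
  shows "p = q"
proof (rule ccontr)
  assume "p \<noteq> q"
  then have nz: "p - q \<noteq> 0" by simp
  have "degree (p - q) \<le> j" using assms by (metis degree_diff_le order.refl)
  moreover have "coeff (p - q) j = 0" using assms by simp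
  ultimately have "degree (p - q) < j" using nz by (metis le_neq_implies_less leading_coeff_0_iff)
  moreover have "orth_below j (p - q)"
    using assms unfolding orth_below_def by (simp add: moment_diff)
  ultimately have "pinner (p - q) (p - q) = 0" by (rule pinner_eq_0_if_orth_below[rotated])
  then show False using pinner_self_pos[OF nz] by simp
qed

lemma OP_characterization: "degree (OP w j) = j \<and> lead_coeff (OP w j) = 1 \<and> orth_below j (OP w j)"
proof -
  have iff: "(\<forall>i<j. (\<lambda>s. poly p s * s ^ i * w s) \<in> borel_measurable lborel \<and>
             integrable lborel (\<lambda>s. poly p s * s ^ i * w s) \<and>
             (LINT s|lborel. poly p s * s ^ i * w s) = 0) \<longleftrightarrow> orth_below j p" for p
    unfolding orth_below_def moment_def using integrable_poly_power_weight by auto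
  have "\<exists>!p. degree p = j \<and> lead_coeff p = 1 \<and> orth_below j p"
    using monic_orth_below_exists monic_orth_below_unique by blast
  then show ?thesis unfolding OP_def iff by (rule theI')
qed

lemma degree_OP: "degree (OP w j) = j"
  and lead_coeff_OP: "lead_coeff (OP w j) = 1"
  and moment_OP_below: "i < j \<Longrightarrow> moment (OP w j) i = 0"
  using OP_characterization[of j] unfolding orth_below_def by auto

lemma hnorm_pos: "0 < hnorm w j"
proof -
  have "OP w j \<noteq> 0" using lead_coeff_OP[of j] by auto
  then show ?thesis
    using pinner_self_pos unfolding hnorm_def pinner_def by (simp add: power2_eq_square)
qed

lemma moment_OP_self: "moment (OP w j) j = hnorm w j"
proof -
  have "hnorm w j = (\<Sum>i\<le>j. coeff (OP w j) i * moment (OP w j) i)"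
    using pinner_eq_moments[of "OP w j" "OP w j"]
    unfolding hnorm_def pinner_def degree_OP by (simp add: power2_eq_square)
  also have "\<dots> = coeff (OP w j) j * moment (OP w j) j"
    using moment_OP_below by (subst sum.remove[of _ j]) (auto intro!: sum.neutral)
  finally show ?thesis using lead_coeff_OP[of j] by (simp add: degree_OP)
qed

end

definition cauchyT2 :: "(real \<Rightarrow> real) \<Rightarrow> real poly \<Rightarrow> complex \<Rightarrow> complex" where
  "cauchyT2 w P z = (LINT s|lborel. complex_of_real (poly P s * w s) / (complex_of_real s - z)\<^sup>2)"

lemma norm_Im_le_dist_real: "\<bar>Im \<zeta>\<bar> \<le> cmod (complex_of_real s - \<zeta>)"
  using abs_Im_le_cmod[of "complex_of_real s - \<zeta>"] by simp

lemma real_minus_nonzero: "Im \<zeta> \<noteq> 0 \<Longrightarrow> complex_of_real s - \<zeta> \<noteq> 0"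
  by (auto simp: complex_eq_iff)

lemma norm_cauchy_kernel_le:
  assumes "Im \<zeta> \<noteq> 0"
  shows "norm (complex_of_real r / (complex_of_real s - \<zeta>) ^ k) \<le> \<bar>r\<bar> / \<bar>Im \<zeta>\<bar> ^ k"
proof -
  have "norm (complex_of_real r / (complex_of_real s - \<zeta>) ^ k) = \<bar>r\<bar> / cmod (complex_of_real s - \<zeta>) ^ k"
    by (simp add: norm_divide norm_power)
  also have "\<dots> \<le> \<bar>r\<bar> / \<bar>Im \<zeta>\<bar> ^ k"
  proof (rule divide_left_mono)
    have pos: "0 < \<bar>Im \<zeta>\<bar>" using assms by simp
    have le: "\<bar>Im \<zeta>\<bar> \<le> cmod (complex_of_real s - \<zeta>)" by (rule norm_Im_le_dist_real)
    show "\<bar>Im \<zeta>\<bar> ^ k \<le> cmod (complex_of_real s - \<zeta>) ^ k"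
      using le by (rule power_mono) simp
    show "0 < cmod (complex_of_real s - \<zeta>) ^ k * \<bar>Im \<zeta>\<bar> ^ k"
      using pos le by (intro mult_pos_pos zero_less_power) linarith+
  qed simp
  finally show ?thesis .
qed

context gauss_weight
begin

lemma integrable_cauchy_integrand:
  assumes "Im \<zeta> \<noteq> 0"
  shows "integrable lborel (\<lambda>s. complex_of_real (poly P s * w s) / (complex_of_real s - \<zeta>) ^ k)"
proof (rule Bochner_Integration.integrable_bound)
  show "integrable lborel (\<lambda>s. \<bar>poly P s * w s\<bar> / \<bar>Im \<zeta>\<bar> ^ k)"
    using integrable_abs_poly_weight by (rule integrable_divide_zero)
  show "AE s in lborel. norm (complex_of_real (poly P s * w s) / (complex_of_real s - \<zeta>) ^ k)
      \<le> norm (\<bar>poly P s * w s\<bar> / \<bar>Im \<zeta>\<bar> ^ k)"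
  proof (intro AE_I2)
    fix s
    show "norm (complex_of_real (poly P s * w s) / (complex_of_real s - \<zeta>) ^ k)
        \<le> norm (\<bar>poly P s * w s\<bar> / \<bar>Im \<zeta>\<bar> ^ k)"
      using norm_cauchy_kernel_le[OF assms, of "poly P s * w s" s k] by simp
  qed
qed measurable

lemma integrable_cauchyT_integrand:
  "Im \<zeta> \<noteq> 0 \<Longrightarrow> integrable lborel (\<lambda>s. complex_of_real (poly P s * w s) / (complex_of_real s - \<zeta>))"
  using integrable_cauchy_integrand[of \<zeta> P 1] by simp

definition l1_norm :: "real poly \<Rightarrow> real" where
  "l1_norm P = (LINT s|lborel. \<bar>poly P s * w s\<bar>)"

lemma norm_cauchy_integral_le:
  assumes "Im \<zeta> \<noteq> 0"
  shows "norm (CLINT s|lborel. complex_of_real (poly P s * w s) / (complex_of_real s - \<zeta>) ^ k)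
           \<le> l1_norm P / \<bar>Im \<zeta>\<bar> ^ k"
proof -
  have "norm (CLINT s|lborel. complex_of_real (poly P s * w s) / (complex_of_real s - \<zeta>) ^ k)
      \<le> (LINT s|lborel. \<bar>poly P s * w s\<bar> / \<bar>Im \<zeta>\<bar> ^ k)"
    by (rule Bochner_Integration.integral_norm_bound_integral[OF integrable_cauchy_integrand[OF assms]
          integrable_divide_zero[OF integrable_abs_poly_weight]])
       (rule norm_cauchy_kernel_le[OF assms])
  then show ?thesis unfolding l1_norm_def by simp
qed

lemma mult_cauchyT:
  assumes "Im \<zeta> \<noteq> 0"
  shows "\<zeta> * cauchyT w P \<zeta> = cauchyT w (pCons 0 P) \<zeta> - complex_of_real (LINT s|lborel. poly P s * w s)"
proof -
  have "\<zeta> * cauchyT w P \<zeta> = (CLINT s|lborel. \<zeta> * (complex_of_real (poly P s * w s) / (complex_of_real s - \<zeta>)))"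
    unfolding cauchyT_def by (rule integral_mult_right_zero[symmetric])
  also have "\<dots> = (CLINT s|lborel. complex_of_real (poly (pCons 0 P) s * w s) / (complex_of_real s - \<zeta>)
                                   - complex_of_real (poly P s * w s))"
    using real_minus_nonzero[OF assms] by (intro Bochner_Integration.integral_cong) (auto simp: field_simps)
  also have "\<dots> = cauchyT w (pCons 0 P) \<zeta> - (CLINT s|lborel. complex_of_real (poly P s * w s))"
    unfolding cauchyT_def
    by (rule Bochner_Integration.integral_diff[OF integrable_cauchyT_integrand[OF assms]
          integrable_poly_weight[THEN integrable_of_real]])
  finally show ?thesis by (simp only: integral_complex_of_real)
qed

lemma mult_cauchyT2:
  assumes "Im \<zeta> \<noteq> 0"
  shows "\<zeta> * cauchyT2 w P \<zeta> = cauchyT2 w (pCons 0 P) \<zeta> - cauchyT w P \<zeta>"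
proof -
  have "\<zeta> * cauchyT2 w P \<zeta> = (CLINT s|lborel. \<zeta> * (complex_of_real (poly P s * w s) / (complex_of_real s - \<zeta>)\<^sup>2))"
    unfolding cauchyT2_def by (rule integral_mult_right_zero[symmetric])
  also have "\<dots> = (CLINT s|lborel. complex_of_real (poly (pCons 0 P) s * w s) / (complex_of_real s - \<zeta>)\<^sup>2
                     - complex_of_real (poly P s * w s) / (complex_of_real s - \<zeta>))"
  proof (intro Bochner_Integration.integral_cong refl)
    fix s
    define G where "G = complex_of_real (poly P s * w s)"
    define U where "U = complex_of_real s - \<zeta>"
    have "U \<noteq> 0" unfolding U_def by (rule real_minus_nonzero[OF assms])
    then have "(complex_of_real s - U) * (G / U\<^sup>2) = complex_of_real s * G / U\<^sup>2 - G / U"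
      by (simp add: field_simps power2_eq_square)
    then show "\<zeta> * (complex_of_real (poly P s * w s) / (complex_of_real s - \<zeta>)\<^sup>2)
        = complex_of_real (poly (pCons 0 P) s * w s) / (complex_of_real s - \<zeta>)\<^sup>2
          - complex_of_real (poly P s * w s) / (complex_of_real s - \<zeta>)"
      by (simp add: G_def U_def)
  qed
  also have "\<dots> = cauchyT2 w (pCons 0 P) \<zeta> - cauchyT w P \<zeta>"
    unfolding cauchyT_def cauchyT2_def
    by (rule Bochner_Integration.integral_diff[OF integrable_cauchy_integrand[OF assms]
          integrable_cauchyT_integrand[OF assms]])
  finally show ?thesis .
qed

lemma pCons_0_monom_mult: "pCons 0 (monom 1 d * P) = monom 1 (Suc d) * (P :: real poly)"
  by (metis monom_Suc mult_pCons_left smult_0_left add_0 mult.commute)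

lemma power_mult_cauchyT:
  assumes "Im \<zeta> \<noteq> 0"
  shows "\<zeta> ^ d * cauchyT w P \<zeta> = cauchyT w (monom 1 d * P) \<zeta> - (\<Sum>i<d. \<zeta> ^ (d - 1 - i) * complex_of_real (moment P i))"
proof (induction d)
  case (Suc d)
  have "\<zeta> ^ Suc d * cauchyT w P \<zeta> = \<zeta> * cauchyT w (monom 1 d * P) \<zeta> - (\<Sum>i<d. \<zeta> ^ (d - i) * complex_of_real (moment P i))"
    unfolding power_Suc mult.assoc Suc right_diff_distrib sum_distrib_left
    by (intro arg_cong2[where f="(-)"] refl sum.cong) (simp add: Suc_diff_Suc[symmetric])
  also have "\<zeta> * cauchyT w (monom 1 d * P) \<zeta> = cauchyT w (monom 1 (Suc d) * P) \<zeta> - complex_of_real (moment P d)"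
    unfolding mult_cauchyT[OF assms] pCons_0_monom_mult moment_def by (simp add: poly_monom mult_ac)
  finally show ?case by (simp add: algebra_simps)
qed simp

lemma power_mult_cauchyT2:
  assumes "Im \<zeta> \<noteq> 0"
  shows "\<zeta> ^ d * cauchyT2 w P \<zeta> = cauchyT2 w (monom 1 d * P) \<zeta> - (\<Sum>i<d. \<zeta> ^ (d - 1 - i) * cauchyT w (monom 1 i * P) \<zeta>)"
proof (induction d)
  case (Suc d)
  have "\<zeta> ^ Suc d * cauchyT2 w P \<zeta> = \<zeta> * cauchyT2 w (monom 1 d * P) \<zeta> - (\<Sum>i<d. \<zeta> ^ (d - i) * cauchyT w (monom 1 i * P) \<zeta>)"
    unfolding power_Suc mult.assoc Suc right_diff_distrib sum_distrib_left
    by (intro arg_cong2[where f="(-)"] refl sum.cong) (simp add: Suc_diff_Suc[symmetric])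
  also have "\<zeta> * cauchyT2 w (monom 1 d * P) \<zeta> = cauchyT2 w (monom 1 (Suc d) * P) \<zeta> - cauchyT w (monom 1 d * P) \<zeta>"
    unfolding mult_cauchyT2[OF assms] pCons_0_monom_mult ..
  finally show ?case by (simp add: algebra_simps)
qed simp

end

lemma norm_product_kernel_le:
  assumes "0 < r" "r \<le> \<bar>Im \<zeta>\<^sub>1\<bar>" "r \<le> \<bar>Im \<zeta>\<^sub>2\<bar>"
  shows "norm (complex_of_real v / ((complex_of_real s - \<zeta>\<^sub>1) * (complex_of_real s - \<zeta>\<^sub>2))) \<le> \<bar>v\<bar> / (r * r)"
proof -
  have "r \<le> cmod (complex_of_real s - \<zeta>\<^sub>1)" "r \<le> cmod (complex_of_real s - \<zeta>\<^sub>2)"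
    using assms norm_Im_le_dist_real[of \<zeta>\<^sub>1 s] norm_Im_le_dist_real[of \<zeta>\<^sub>2 s] by linarith+
  then have "\<bar>v\<bar> / (cmod (complex_of_real s - \<zeta>\<^sub>1) * cmod (complex_of_real s - \<zeta>\<^sub>2)) \<le> \<bar>v\<bar> / (r * r)"
    using assms(1) by (intro divide_left_mono mult_mono mult_pos_pos) auto
  then show ?thesis by (simp add: norm_divide norm_mult)
qed

context gauss_weight
begin

lemma cauchyT_diff_quotient:
  assumes "Im \<zeta> \<noteq> 0" "Im (\<zeta> + h) \<noteq> 0" "h \<noteq> 0"
  shows "(cauchyT w P (\<zeta> + h) - cauchyT w P \<zeta>) / h =
     (CLINT s|lborel. complex_of_real (poly P s * w s) / ((complex_of_real s - (\<zeta> + h)) * (complex_of_real s - \<zeta>)))"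
proof -
  have "cauchyT w P (\<zeta> + h) - cauchyT w P \<zeta> =
     (CLINT s|lborel. complex_of_real (poly P s * w s) / (complex_of_real s - (\<zeta> + h))
                    - complex_of_real (poly P s * w s) / (complex_of_real s - \<zeta>))"
    unfolding cauchyT_def
    by (rule Bochner_Integration.integral_diff[symmetric,
          OF integrable_cauchyT_integrand[OF assms(2)] integrable_cauchyT_integrand[OF assms(1)]])
  also have "\<dots> = (CLINT s|lborel. h * (complex_of_real (poly P s * w s)
                        / ((complex_of_real s - (\<zeta> + h)) * (complex_of_real s - \<zeta>))))"
    using real_minus_nonzero[OF assms(1)] real_minus_nonzero[OF assms(2)]
    by (intro Bochner_Integration.integral_cong refl) (simp add: field_simps)
  also have "\<dots> = h * (CLINT s|lborel. complex_of_real (poly P s * w s)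
                        / ((complex_of_real s - (\<zeta> + h)) * (complex_of_real s - \<zeta>)))"
    by (rule integral_mult_right_zero)
  finally show ?thesis using assms(3) by simp
qed

lemma tendsto_cauchyT_diff_quotient:
  assumes "Im \<zeta> \<noteq> 0" and Y: "\<And>i. Y i \<noteq> 0" "\<And>i. norm (Y i) < \<bar>Im \<zeta>\<bar> / 2" "Y \<longlonglongrightarrow> 0"
  shows "(\<lambda>i. (cauchyT w P (\<zeta> + Y i) - cauchyT w P \<zeta>) / Y i) \<longlonglongrightarrow> cauchyT2 w P \<zeta>"
proof -
  define r where "r = \<bar>Im \<zeta>\<bar> / 2"
  define g where "g s = complex_of_real (poly P s * w s)" for s
  have r: "0 < r" using assms by (simp add: r_def)
  have Im_shift: "r \<le> \<bar>Im (\<zeta> + Y i)\<bar>" for i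
    using abs_Im_le_cmod[of "Y i"] Y(2)[of i] unfolding r_def by (simp add: abs_if split: if_splits)
  then have Im_shift_nz: "Im (\<zeta> + Y i) \<noteq> 0" for i
    using r by (metis abs_zero not_le)
  have "(\<lambda>i. CLINT s|lborel. g s / ((complex_of_real s - (\<zeta> + Y i)) * (complex_of_real s - \<zeta>)))
        \<longlonglongrightarrow> (CLINT s|lborel. g s / (complex_of_real s - \<zeta>)\<^sup>2)"
  proof (rule integral_dominated_convergence[where w="\<lambda>s. \<bar>poly P s * w s\<bar> / (r * r)"])
    show "integrable lborel (\<lambda>s. \<bar>poly P s * w s\<bar> / (r * r))"
      using integrable_abs_poly_weight by (rule integrable_divide_zero)
    show "AE s in lborel. (\<lambda>i. g s / ((complex_of_real s - (\<zeta> + Y i)) * (complex_of_real s - \<zeta>)))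
                            \<longlonglongrightarrow> g s / (complex_of_real s - \<zeta>)\<^sup>2"
    proof (intro AE_I2)
      fix s
      have "(\<lambda>i. g s / ((complex_of_real s - (\<zeta> + Y i)) * (complex_of_real s - \<zeta>)))
              \<longlonglongrightarrow> g s / ((complex_of_real s - (\<zeta> + 0)) * (complex_of_real s - \<zeta>))"
        using Y(3) real_minus_nonzero[OF assms(1), of s] by (intro tendsto_intros) auto
      then show "(\<lambda>i. g s / ((complex_of_real s - (\<zeta> + Y i)) * (complex_of_real s - \<zeta>)))
                   \<longlonglongrightarrow> g s / (complex_of_real s - \<zeta>)\<^sup>2"
        by (simp add: power2_eq_square)
    qed
    show "AE s in lborel. norm (g s / ((complex_of_real s - (\<zeta> + Y i)) * (complex_of_real s - \<zeta>)))
                            \<le> \<bar>poly P s * w s\<bar> / (r * r)" for i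
      unfolding g_def using r Im_shift[of i] by (intro AE_I2 norm_product_kernel_le) (auto simp: r_def)
  qed (auto simp: g_def)
  then show ?thesis
    unfolding cauchyT2_def g_def using cauchyT_diff_quotient[OF assms(1) Im_shift_nz Y(1)] by simp
qed

lemma has_field_derivative_cauchyT:
  assumes "Im \<zeta> \<noteq> 0"
  shows "(cauchyT w P has_field_derivative cauchyT2 w P \<zeta>) (at \<zeta>)"
proof -
  have "(\<lambda>i. (cauchyT w P (\<zeta> + X i) - cauchyT w P \<zeta>) / X i) \<longlonglongrightarrow> cauchyT2 w P \<zeta>"
    if X: "\<And>i. X i \<noteq> 0" "X \<longlonglongrightarrow> 0" for X
  proof -
    have "0 < \<bar>Im \<zeta>\<bar> / 2" using assms by simp
    then obtain N where N: "\<And>i. N \<le> i \<Longrightarrow> norm (X i) < \<bar>Im \<zeta>\<bar> / 2"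
      using X(2) unfolding LIMSEQ_def by (metis dist_0_norm dist_commute)
    have "(\<lambda>i. (cauchyT w P (\<zeta> + X (i + N)) - cauchyT w P \<zeta>) / X (i + N)) \<longlonglongrightarrow> cauchyT2 w P \<zeta>"
      using N X LIMSEQ_ignore_initial_segment[OF X(2), of N]
      by (intro tendsto_cauchyT_diff_quotient[OF assms]) auto
    then show ?thesis by (rule LIMSEQ_offset)
  qed
  then show ?thesis
    unfolding DERIV_def tendsto_at_iff_sequentially by (auto simp: comp_def)
qed

end

lemma tendsto_inverse_0_vertical:
  assumes "\<And>j. Im (Z j) = real (Suc j)"
  shows "(\<lambda>j. inverse (Z j)) \<longlonglongrightarrow> 0"
proof (rule Lim_null_comparison)
  have "norm (inverse (Z j)) \<le> inverse (real (Suc j))" for j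
    using abs_Im_le_cmod[of "Z j"] assms[of j] by (simp add: norm_inverse le_imp_inverse_le)
  then show "\<forall>\<^sub>F j in sequentially. norm (inverse (Z j)) \<le> inverse (real (Suc j))" by simp
qed (rule LIMSEQ_inverse_real_of_nat)

context gauss_weight
begin

lemma tendsto_cauchy_integral_0_vertical:
  assumes "\<And>j. Im (Z j) = real (Suc j)" "0 < k"
  shows "(\<lambda>j. CLINT s|lborel. complex_of_real (poly P s * w s) / (complex_of_real s - Z j) ^ k) \<longlonglongrightarrow> 0"
proof (rule Lim_null_comparison)
  have "norm (CLINT s|lborel. complex_of_real (poly P s * w s) / (complex_of_real s - Z j) ^ k)
          \<le> l1_norm P * inverse (real (Suc j))" for j
  proof -
    have "l1_norm P / real (Suc j) ^ k \<le> l1_norm P / real (Suc j)"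
      using \<open>0 < k\<close> by (intro divide_left_mono) (auto simp: l1_norm_def intro: self_le_power)
    then show ?thesis
      using norm_cauchy_integral_le[of "Z j" P k] assms(1)[of j] by (simp add: divide_inverse)
  qed
  then show "\<forall>\<^sub>F j in sequentially. norm (CLINT s|lborel. complex_of_real (poly P s * w s) / (complex_of_real s - Z j) ^ k)
               \<le> l1_norm P * inverse (real (Suc j))"
    by simp
  show "(\<lambda>j. l1_norm P * inverse (real (Suc j))) \<longlonglongrightarrow> 0"
    using tendsto_mult[OF tendsto_const LIMSEQ_inverse_real_of_nat, of "l1_norm P"] by simp
qed

lemma tendsto_cauchyT_0_vertical:
  "(\<And>j. Im (Z j) = real (Suc j)) \<Longrightarrow> (\<lambda>j. cauchyT w P (Z j)) \<longlonglongrightarrow> 0"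
  using tendsto_cauchy_integral_0_vertical[of Z 1 P] unfolding cauchyT_def by simp

lemma tendsto_cauchyT2_0_vertical:
  "(\<And>j. Im (Z j) = real (Suc j)) \<Longrightarrow> (\<lambda>j. cauchyT2 w P (Z j)) \<longlonglongrightarrow> 0"
  using tendsto_cauchy_integral_0_vertical[of Z 2 P] unfolding cauchyT2_def by simp

lemma tendsto_power_mult_cauchyT_0_vertical:
  assumes "\<And>j. Im (Z j) = real (Suc j)" "\<And>l. l < d \<Longrightarrow> moment P l = 0"
  shows "(\<lambda>j. Z j ^ d * cauchyT w P (Z j)) \<longlonglongrightarrow> 0"
proof -
  have "Z j ^ d * cauchyT w P (Z j) = cauchyT w (monom 1 d * P) (Z j)" for j
    using power_mult_cauchyT[of "Z j" d P] assms by simp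
  then show ?thesis using tendsto_cauchyT_0_vertical[OF assms(1)] by simp
qed

end

lemma tendsto_eps_inverse_vertical:
  assumes "\<And>j. 0 < e j" "e \<longlonglongrightarrow> 0"
  shows "(\<lambda>j. complex_of_real (e j) / (complex_of_real u - (complex_of_real t + \<i> * complex_of_real (e j))))
           \<longlonglongrightarrow> (if u = t then \<i> else 0)"
proof (cases "u = t")
  case True
  have "complex_of_real (e j) / (complex_of_real t - (complex_of_real t + \<i> * complex_of_real (e j))) = \<i>" for j
    using assms(1)[of j] by (simp add: field_simps)
  then show ?thesis using True by simp
next
  case False
  have "(\<lambda>j. complex_of_real (e j) / (complex_of_real u - (complex_of_real t + \<i> * complex_of_real (e j))))
          \<longlonglongrightarrow> complex_of_real 0 / (complex_of_real u - (complex_of_real t + \<i> * complex_of_real 0))"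
    using assms(2) False by (intro tendsto_intros) (auto simp: complex_eq_iff)
  then show ?thesis using False by simp
qed

lemma integral_inverse_square_interval:
  fixes \<zeta> :: complex and a b :: real
  assumes "Im \<zeta> \<noteq> 0" "a \<le> b"
  shows "integrable lborel (\<lambda>s. complex_of_real (indicator {a<..<b} s) / (complex_of_real s - \<zeta>)\<^sup>2)"
    and "(CLINT s|lborel. complex_of_real (indicator {a<..<b} s) / (complex_of_real s - \<zeta>)\<^sup>2)
           = 1 / (complex_of_real a - \<zeta>) - 1 / (complex_of_real b - \<zeta>)"
proof -
  have nz: "complex_of_real s - \<zeta> \<noteq> 0" for s using real_minus_nonzero[OF assms(1)] .
  have cont: "continuous_on {a..b} (\<lambda>s. 1 / (complex_of_real s - \<zeta>)\<^sup>2)"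
    using nz by (intro continuous_intros) auto
  have "interval_lebesgue_integrable lborel (ereal a) (ereal b) (\<lambda>s. 1 / (complex_of_real s - \<zeta>)\<^sup>2)"
    using interval_integrable_continuous_on[OF assms(2) cont] .
  then show "integrable lborel (\<lambda>s. complex_of_real (indicator {a<..<b} s) / (complex_of_real s - \<zeta>)\<^sup>2)"
    using assms(2)
    by (simp add: interval_lebesgue_integrable_def set_integrable_def einterval_def scaleR_conv_of_real
        greaterThanLessThan_def greaterThan_def lessThan_def Collect_conj_eq)
  have "interval_lebesgue_integral lborel (ereal a) (ereal b) (\<lambda>s. 1 / (complex_of_real s - \<zeta>)\<^sup>2)
      = - 1 / (complex_of_real b - \<zeta>) - - 1 / (complex_of_real a - \<zeta>)"
  proof (rule interval_integral_FTC_finite[where F="\<lambda>s. - 1 / (complex_of_real s - \<zeta>)"])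
    show "continuous_on {min a b..max a b} (\<lambda>s. 1 / (complex_of_real s - \<zeta>)\<^sup>2)"
      using cont assms(2) by simp
    fix s
    have "((\<lambda>u. - 1 / (u - \<zeta>)) has_field_derivative 1 / (complex_of_real s - \<zeta>)\<^sup>2) (at (complex_of_real s))"
      using nz[of s] by (auto intro!: derivative_eq_intros simp: power2_eq_square)
    then show "((\<lambda>s. - 1 / (complex_of_real s - \<zeta>)) has_vector_derivative 1 / (complex_of_real s - \<zeta>)\<^sup>2)
                 (at s within {min a b..max a b})"
      by (intro has_vector_derivative_real_field)
  qed
  moreover have "interval_lebesgue_integral lborel (ereal a) (ereal b) (\<lambda>s. 1 / (complex_of_real s - \<zeta>)\<^sup>2)
      = (CLINT s|lborel. complex_of_real (indicator {a<..<b} s) / (complex_of_real s - \<zeta>)\<^sup>2)"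
    using assms(2) by (simp add: interval_integral_Ioo set_lebesgue_integral_def scaleR_conv_of_real)
  ultimately show "(CLINT s|lborel. complex_of_real (indicator {a<..<b} s) / (complex_of_real s - \<zeta>)\<^sup>2)
      = 1 / (complex_of_real a - \<zeta>) - 1 / (complex_of_real b - \<zeta>)"
    by simp
qed

lemma poly_gauss_lipschitz:
  fixes P :: "real poly"
  obtains L where "0 \<le> L"
    "\<And>s. s \<in> {t - d..t + d} \<Longrightarrow> \<bar>poly P s * exp (- s\<^sup>2) - poly P t * exp (- t\<^sup>2)\<bar> \<le> L * \<bar>s - t\<bar>"
proof -
  define G' where "G' s = poly (pderiv P) s * exp (- s\<^sup>2) + poly P s * (exp (- s\<^sup>2) * (- (2 * s)))" for s
  have der: "((\<lambda>s. poly P s * exp (- s\<^sup>2)) has_field_derivative G' s) (at s within S)" for s S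
    unfolding G'_def by (auto intro!: derivative_eq_intros simp: power2_eq_square)
  have "continuous_on {t - d..t + d} G'"
    unfolding G'_def by (intro continuous_intros continuous_on_poly)
  then obtain L where L: "0 \<le> L" "\<And>s. s \<in> {t - d..t + d} \<Longrightarrow> norm (G' s) \<le> L"
    using continuous_on_compact_bound[of "{t - d..t + d}" G'] by auto
  show ?thesis
  proof (rule that[OF L(1)])
    fix s assume s: "s \<in> {t - d..t + d}"
    then have "t \<in> {t - d..t + d}" by auto
    then show "\<bar>poly P s * exp (- s\<^sup>2) - poly P t * exp (- t\<^sup>2)\<bar> \<le> L * \<bar>s - t\<bar>"
      using field_differentiable_bound[of "{t - d..t + d}" "\<lambda>s. poly P s * exp (- s\<^sup>2)" G' L s t] der L s
      by auto
  qed
qed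

lemma tendsto_eps_kernel_0:
  assumes "s \<noteq> t" "e \<longlonglongrightarrow> 0"
  shows "(\<lambda>j. complex_of_real (e j) * (r / (complex_of_real s - (complex_of_real t + \<i> * complex_of_real (e j))) ^ k))
           \<longlonglongrightarrow> 0"
proof -
  have "(\<lambda>j. complex_of_real (e j) * (r / (complex_of_real s - (complex_of_real t + \<i> * complex_of_real (e j))) ^ k))
          \<longlonglongrightarrow> complex_of_real 0 * (r / (complex_of_real s - (complex_of_real t + \<i> * complex_of_real 0)) ^ k)"
    using assms by (intro tendsto_intros) (auto simp: complex_eq_iff)
  then show ?thesis by simp
qed

lemma norm_eps_kernel:
  assumes "0 < e"
  shows "norm (complex_of_real e * (complex_of_real r / (complex_of_real s - (complex_of_real t + \<i> * complex_of_real e))\<^sup>2))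
           = e * \<bar>r\<bar> / ((s - t)\<^sup>2 + e\<^sup>2)"
proof -
  have "(cmod (complex_of_real s - (complex_of_real t + \<i> * complex_of_real e)))\<^sup>2 = (s - t)\<^sup>2 + e\<^sup>2"
    by (simp add: cmod_def)
  then show ?thesis using assms by (simp add: norm_mult norm_divide norm_power)
qed

lemma eps_kernel_bound:
  fixes e r s t M d :: real
  assumes e: "0 < e" "e \<le> 1" and "0 < d" "0 \<le> M"
    and lip: "\<bar>s - t\<bar> < d \<Longrightarrow> \<bar>r\<bar> \<le> M * \<bar>s - t\<bar>"
  shows "e * \<bar>r\<bar> / ((s - t)\<^sup>2 + e\<^sup>2) \<le> \<bar>r\<bar> / d\<^sup>2 + M / 2 * indicator {t - d..t + d} s"
proof (cases "\<bar>s - t\<bar> < d")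
  case True
  have pos: "0 < (s - t)\<^sup>2 + e\<^sup>2" using e by (simp add: add_nonneg_pos)
  have "e * \<bar>r\<bar> / ((s - t)\<^sup>2 + e\<^sup>2) \<le> M * (e * \<bar>s - t\<bar> / ((s - t)\<^sup>2 + e\<^sup>2))"
    using lip[OF True] e pos by (simp add: divide_right_mono mult_left_mono mult.left_commute)
  also have "\<dots> \<le> M * (1 / 2)"
    using sum_squares_bound[of e "\<bar>s - t\<bar>"] pos \<open>0 \<le> M\<close>
    by (intro mult_left_mono) (simp_all add: divide_simps power2_abs)
  finally have "e * \<bar>r\<bar> / ((s - t)\<^sup>2 + e\<^sup>2) \<le> M / 2" by simp
  moreover have "indicator {t - d..t + d} s = (1::real)"
    using True by (simp add: indicator_def abs_less_iff)
  moreover have "0 \<le> \<bar>r\<bar> / d\<^sup>2" by simp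
  ultimately show ?thesis by (simp only: mult_1_right)
next
  case False
  then have "d\<^sup>2 \<le> \<bar>s - t\<bar>\<^sup>2" using \<open>0 < d\<close> by (intro power_mono) auto
  then have "d\<^sup>2 \<le> (s - t)\<^sup>2 + e\<^sup>2" by (simp add: add_increasing2)
  then have "e * \<bar>r\<bar> / ((s - t)\<^sup>2 + e\<^sup>2) \<le> 1 * \<bar>r\<bar> / d\<^sup>2"
    using e \<open>0 < d\<close> by (intro frac_le mult_right_mono) auto
  moreover have "0 \<le> M / 2 * indicator {t - d..t + d} s" using \<open>0 \<le> M\<close> by simp
  ultimately show ?thesis by linarith
qed

text \<open>The kernel \<open>\<epsilon> / (s - t - \<i>\<epsilon>)\<^sup>2\<close> is bounded by \<open>1 / (2 \<bar>s - t\<bar>)\<close> uniformly in \<open>\<epsilon>\<close>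
  and tends to \<open>0\<close> off \<open>t\<close>, so dominated convergence applies to functions vanishing to first
  order at \<open>t\<close>.\<close>

lemma tendsto_eps_singular_integral_0:
  fixes g :: "real \<Rightarrow> real"
  assumes g: "g \<in> borel_measurable lborel" "integrable lborel g"
    and lip: "\<And>s. \<bar>s - t\<bar> < d \<Longrightarrow> s \<noteq> t \<Longrightarrow> \<bar>g s\<bar> \<le> M * \<bar>s - t\<bar>"
    and "0 \<le> M" "0 < d"
    and e: "\<And>j. 0 < e j" "\<And>j. e j \<le> 1" "e \<longlonglongrightarrow> 0"
  shows "(\<lambda>j. CLINT s|lborel. complex_of_real (e j) *
            (complex_of_real (g s) / (complex_of_real s - (complex_of_real t + \<i> * complex_of_real (e j)))\<^sup>2)) \<longlonglongrightarrow> 0"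
proof -
  define Z where "Z j = complex_of_real t + \<i> * complex_of_real (e j)" for j
  have "(\<lambda>j. CLINT s|lborel. complex_of_real (e j) * (complex_of_real (g s) / (complex_of_real s - Z j)\<^sup>2))
          \<longlonglongrightarrow> (CLINT (s::real)|lborel. 0)"
  proof (rule integral_dominated_convergence[where w="\<lambda>s. \<bar>g s\<bar> / d\<^sup>2 + M / 2 * indicator {t - d..t + d} s"])
    have "integrable lborel (indicator {t - d..t + d} :: real \<Rightarrow> real)"
      using \<open>0 < d\<close> by (intro integrable_real_indicator) (auto simp: emeasure_lborel_Icc)
    then show "integrable lborel (\<lambda>s. \<bar>g s\<bar> / d\<^sup>2 + M / 2 * indicator {t - d..t + d} s)"
      using g(2) by (intro Bochner_Integration.integrable_add integrable_divide_zero integrable_abs integrable_mult_right)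
    show "AE s in lborel. (\<lambda>j. complex_of_real (e j) * (complex_of_real (g s) / (complex_of_real s - Z j)\<^sup>2)) \<longlonglongrightarrow> 0"
      using AE_lborel_singleton[of t] unfolding Z_def by eventually_elim (rule tendsto_eps_kernel_0[OF _ e(3)])
    show "AE s in lborel. norm (complex_of_real (e j) * (complex_of_real (g s) / (complex_of_real s - Z j)\<^sup>2))
            \<le> \<bar>g s\<bar> / d\<^sup>2 + M / 2 * indicator {t - d..t + d} s" for j
      using AE_lborel_singleton[of t] unfolding Z_def norm_eps_kernel[OF e(1)]
      by eventually_elim (use lip e(1,2) \<open>0 \<le> M\<close> \<open>0 < d\<close> in \<open>intro eps_kernel_bound; auto\<close>)
  qed (use g(1) in \<open>simp_all add: Z_def\<close>)
  then show ?thesis unfolding Z_def by simp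
qed

lemma step_kernel_eq:
  assumes "Im \<zeta> \<noteq> 0"
  shows "complex_of_real (v * (sm * indicator {t - d<..<t} s + sp * indicator {t<..<t + d} s)) / (complex_of_real s - \<zeta>)\<^sup>2
    = complex_of_real (v * sm) * (complex_of_real (indicator {t - d<..<t} s) / (complex_of_real s - \<zeta>)\<^sup>2)
      + complex_of_real (v * sp) * (complex_of_real (indicator {t<..<t + d} s) / (complex_of_real s - \<zeta>)\<^sup>2)"
  using real_minus_nonzero[OF assms, of s] by (simp add: field_simps)

lemma integrable_step_kernel:
  assumes "Im \<zeta> \<noteq> 0" "0 \<le> d"
  shows "integrable lborel (\<lambda>s. complex_of_real (v * (sm * indicator {t - d<..<t} s + sp * indicator {t<..<t + d} s))
                                   / (complex_of_real s - \<zeta>)\<^sup>2)"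
  unfolding step_kernel_eq[OF assms(1)] using integral_inverse_square_interval(1)[OF assms(1)] assms(2)
  by (intro integrable_mult_right Bochner_Integration.integrable_add) auto

lemma tendsto_eps_step_integral:
  assumes e: "\<And>j. 0 < e j" "e \<longlonglongrightarrow> 0" and "0 < d"
  shows "(\<lambda>j. complex_of_real (e j) * (CLINT s|lborel.
            complex_of_real (v * (sm * indicator {t - d<..<t} s + sp * indicator {t<..<t + d} s))
             / (complex_of_real s - (complex_of_real t + \<i> * complex_of_real (e j)))\<^sup>2))
           \<longlonglongrightarrow> \<i> * complex_of_real ((sp - sm) * v)"
proof -
  define Z where "Z j = complex_of_real t + \<i> * complex_of_real (e j)" for j
  define q where "q u j = complex_of_real (e j) / (complex_of_real u - Z j)" for u j
  have ImZ: "Im (Z j) \<noteq> 0" for j using e(1)[of j] by (simp add: Z_def)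
  have integral_eq: "complex_of_real (e j) * (CLINT s|lborel.
            complex_of_real (v * (sm * indicator {t - d<..<t} s + sp * indicator {t<..<t + d} s)) / (complex_of_real s - Z j)\<^sup>2)
        = complex_of_real (v * sm) * (q (t - d) j - q t j) + complex_of_real (v * sp) * (q t j - q (t + d) j)" for j
  proof -
    note int = integral_inverse_square_interval[OF ImZ[of j]]
    have eq: "(CLINT s|lborel.
            complex_of_real (v * (sm * indicator {t - d<..<t} s + sp * indicator {t<..<t + d} s)) / (complex_of_real s - Z j)\<^sup>2)
        = complex_of_real (v * sm) * (1 / (complex_of_real (t - d) - Z j) - 1 / (complex_of_real t - Z j))
          + complex_of_real (v * sp) * (1 / (complex_of_real t - Z j) - 1 / (complex_of_real (t + d) - Z j))"
      unfolding step_kernel_eq[OF ImZ]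
      using int(1)[of "t - d" t] int(1)[of t "t + d"] \<open>0 < d\<close>
      by (simp only: Bochner_Integration.integral_add integrable_mult_right integral_mult_right_zero
          int(2)[of "t - d" t] int(2)[of t "t + d"] less_imp_le le_add_same_cancel1 diff_le_self)
    show ?thesis unfolding eq q_def by (simp add: algebra_simps)
  qed
  have q_lim: "(\<lambda>j. q u j) \<longlonglongrightarrow> (if u = t then \<i> else 0)" for u
    unfolding q_def Z_def by (rule tendsto_eps_inverse_vertical[OF e])
  have "(\<lambda>j. complex_of_real (v * sm) * (q (t - d) j - q t j) + complex_of_real (v * sp) * (q t j - q (t + d) j))
        \<longlonglongrightarrow> complex_of_real (v * sm) * (0 - \<i>) + complex_of_real (v * sp) * (\<i> - 0)"
    using q_lim[of "t - d"] q_lim[of t] q_lim[of "t + d"] \<open>0 < d\<close> by (intro tendsto_intros) auto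
  then show ?thesis unfolding Z_def[symmetric] integral_eq by (simp add: algebra_simps)
qed

context gauss_weight
begin

lemma tendsto_eps_cauchyT_0:
  assumes "\<And>j. 0 < e j" "e \<longlonglongrightarrow> 0"
  shows "(\<lambda>j. complex_of_real (e j) * cauchyT w P (complex_of_real t + \<i> * complex_of_real (e j))) \<longlonglongrightarrow> 0"
proof -
  define Z where "Z j = complex_of_real t + \<i> * complex_of_real (e j)" for j
  have "(\<lambda>j. CLINT s|lborel. complex_of_real (e j) * (complex_of_real (poly P s * w s) / (complex_of_real s - Z j)))
          \<longlonglongrightarrow> (CLINT (s::real)|lborel. 0)"
  proof (rule integral_dominated_convergence[where w="\<lambda>s. \<bar>poly P s * w s\<bar>"])
    show "AE s in lborel. (\<lambda>j. complex_of_real (e j) * (complex_of_real (poly P s * w s) / (complex_of_real s - Z j))) \<longlonglongrightarrow> 0"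
      using AE_lborel_singleton[of t] unfolding Z_def
      by eventually_elim (use tendsto_eps_kernel_0[OF _ assms(2), where k=1] in simp)
    show "AE s in lborel. norm (complex_of_real (e j) * (complex_of_real (poly P s * w s) / (complex_of_real s - Z j)))
            \<le> \<bar>poly P s * w s\<bar>" for j
    proof (intro AE_I2)
      fix s
      have "e j \<le> cmod (complex_of_real s - Z j)"
        using norm_Im_le_dist_real[of "Z j" s] assms(1)[of j] by (simp add: Z_def)
      then have "\<bar>poly P s * w s\<bar> * (e j / cmod (complex_of_real s - Z j)) \<le> \<bar>poly P s * w s\<bar> * 1"
        using assms(1)[of j] by (intro mult_left_mono) (auto simp: divide_le_eq_1)
      then show "norm (complex_of_real (e j) * (complex_of_real (poly P s * w s) / (complex_of_real s - Z j)))
                   \<le> \<bar>poly P s * w s\<bar>"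
        using assms(1)[of j] by (simp add: norm_divide norm_mult abs_mult mult_ac)
    qed
  qed (auto simp: Z_def integrable_abs_poly_weight)
  then show ?thesis unfolding cauchyT_def Z_def integral_mult_right_zero by simp
qed

lemma cauchyT2_split:
  assumes "Im \<zeta> \<noteq> 0" "integrable lborel (\<lambda>s. complex_of_real (f s) / (complex_of_real s - \<zeta>)\<^sup>2)"
  shows "c * cauchyT2 w P \<zeta> =
      c * (CLINT s|lborel. complex_of_real (poly P s * w s - f s) / (complex_of_real s - \<zeta>)\<^sup>2)
      + c * (CLINT s|lborel. complex_of_real (f s) / (complex_of_real s - \<zeta>)\<^sup>2)"
proof -
  have "cauchyT2 w P \<zeta> = (CLINT s|lborel. complex_of_real (poly P s * w s - f s) / (complex_of_real s - \<zeta>)\<^sup>2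
                                        + complex_of_real (f s) / (complex_of_real s - \<zeta>)\<^sup>2)"
    unfolding cauchyT2_def by (simp add: diff_divide_distrib)
  also have "\<dots> = (CLINT s|lborel. complex_of_real (poly P s * w s - f s) / (complex_of_real s - \<zeta>)\<^sup>2)
                  + (CLINT s|lborel. complex_of_real (f s) / (complex_of_real s - \<zeta>)\<^sup>2)"
    using integrable_cauchy_integrand[OF assms(1), where P=P and k=2] assms(2)
    by (intro Bochner_Integration.integral_add) (auto simp: diff_divide_distrib simp del: of_real_mult)
  finally show ?thesis by (simp add: distrib_left)
qed

lemma step_remainder_lipschitz:
  assumes left: "\<And>s. t - d < s \<Longrightarrow> s < t \<Longrightarrow> w s = exp (- s\<^sup>2) * sm"
    and right: "\<And>s. t < s \<Longrightarrow> s < t + d \<Longrightarrow> w s = exp (- s\<^sup>2) * sp"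
  obtains M where "0 \<le> M" "\<And>s. \<bar>s - t\<bar> < d \<Longrightarrow> s \<noteq> t \<Longrightarrow>
    \<bar>poly P s * w s - poly P t * exp (- t\<^sup>2) * (sm * indicator {t - d<..<t} s + sp * indicator {t<..<t + d} s)\<bar>
      \<le> M * \<bar>s - t\<bar>"
proof -
  define G where "G s = poly P s * exp (- s\<^sup>2)" for s
  obtain L where L: "0 \<le> L" "\<And>s. s \<in> {t - d..t + d} \<Longrightarrow> \<bar>G s - G t\<bar> \<le> L * \<bar>s - t\<bar>"
    using poly_gauss_lipschitz[of t d P] unfolding G_def by metis
  show ?thesis
  proof (rule that[of "(\<bar>sm\<bar> + \<bar>sp\<bar>) * L"])
    fix s assume s: "\<bar>s - t\<bar> < d" "s \<noteq> t"
    obtain c where c: "poly P s * w s - G t * (sm * indicator {t - d<..<t} s + sp * indicator {t<..<t + d} s)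
        = c * (G s - G t)" "\<bar>c\<bar> \<le> \<bar>sm\<bar> + \<bar>sp\<bar>"
    proof (cases "s < t")
      case True
      then show ?thesis using s left[of s] that[of sm] unfolding G_def by (auto simp: algebra_simps abs_less_iff)
    next
      case False
      then show ?thesis using s right[of s] that[of sp] unfolding G_def by (auto simp: algebra_simps abs_less_iff)
    qed
    have "\<bar>c * (G s - G t)\<bar> \<le> (\<bar>sm\<bar> + \<bar>sp\<bar>) * (L * \<bar>s - t\<bar>)"
      unfolding abs_mult using c(2) L(2)[of s] s by (intro mult_mono) (auto simp: abs_less_iff)
    then show "\<bar>poly P s * w s - poly P t * exp (- t\<^sup>2) * (sm * indicator {t - d<..<t} s + sp * indicator {t<..<t + d} s)\<bar>
        \<le> (\<bar>sm\<bar> + \<bar>sp\<bar>) * L * \<bar>s - t\<bar>"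
      using c(1) unfolding G_def by (simp add: mult_ac)
  qed (use L(1) in simp)
qed

text \<open>Near a jump of \<open>w\<close>, subtract the step function that the jump produces: the remainder
  vanishes to first order at \<open>t\<close>, while the step contributes the boundary value.\<close>

lemma tendsto_eps_cauchyT2_jump:
  assumes e: "\<And>j. 0 < e j" "\<And>j. e j \<le> 1" "e \<longlonglongrightarrow> 0" and "0 < d"
    and left: "\<And>s. t - d < s \<Longrightarrow> s < t \<Longrightarrow> w s = exp (- s\<^sup>2) * sm"
    and right: "\<And>s. t < s \<Longrightarrow> s < t + d \<Longrightarrow> w s = exp (- s\<^sup>2) * sp"
  shows "(\<lambda>j. complex_of_real (e j) * cauchyT2 w P (complex_of_real t + \<i> * complex_of_real (e j)))
           \<longlonglongrightarrow> \<i> * complex_of_real ((sp - sm) * (poly P t * exp (- t\<^sup>2)))"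
proof -
  define Z where "Z j = complex_of_real t + \<i> * complex_of_real (e j)" for j
  define f where "f s = poly P t * exp (- t\<^sup>2) * (sm * indicator {t - d<..<t} s + sp * indicator {t<..<t + d} s)" for s
  define g where "g s = poly P s * w s - f s" for s
  have ImZ: "Im (Z j) \<noteq> 0" for j using e(1)[of j] by (simp add: Z_def)
  have decomp: "complex_of_real (e j) * cauchyT2 w P (Z j) =
      (CLINT s|lborel. complex_of_real (e j) * (complex_of_real (g s) / (complex_of_real s - Z j)\<^sup>2))
      + complex_of_real (e j) * (CLINT s|lborel. complex_of_real (f s) / (complex_of_real s - Z j)\<^sup>2)" for j
    unfolding g_def integral_mult_right_zero
    by (rule cauchyT2_split[OF ImZ]) (unfold f_def, rule integrable_step_kernel[OF ImZ], use \<open>0 < d\<close> in simp)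
  have "(\<lambda>j. CLINT s|lborel. complex_of_real (e j) * (complex_of_real (g s) / (complex_of_real s - Z j)\<^sup>2)) \<longlonglongrightarrow> 0"
  proof -
    obtain M where M: "0 \<le> M" "\<And>s. \<bar>s - t\<bar> < d \<Longrightarrow> s \<noteq> t \<Longrightarrow> \<bar>g s\<bar> \<le> M * \<bar>s - t\<bar>"
      using step_remainder_lipschitz[where t=t and d=d and sm=sm and sp=sp and P=P, OF left right]
      unfolding g_def f_def by metis
    have "g \<in> borel_measurable lborel"
      unfolding g_def[abs_def] f_def by measurable
    moreover have "integrable lborel g"
      unfolding g_def[abs_def] f_def using \<open>0 < d\<close>
      by (intro Bochner_Integration.integrable_diff integrable_poly_weight integrable_mult_right
          Bochner_Integration.integrable_add integrable_real_indicator) auto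
    ultimately show ?thesis unfolding Z_def
      by (rule tendsto_eps_singular_integral_0[OF _ _ M(2) M(1) \<open>0 < d\<close> e])
  qed
  moreover have "(\<lambda>j. complex_of_real (e j) * (CLINT s|lborel. complex_of_real (f s) / (complex_of_real s - Z j)\<^sup>2))
      \<longlonglongrightarrow> \<i> * complex_of_real ((sp - sm) * (poly P t * exp (- t\<^sup>2)))"
    unfolding Z_def f_def by (rule tendsto_eps_step_integral[OF e(1,3) \<open>0 < d\<close>])
  ultimately have "(\<lambda>j. complex_of_real (e j) * cauchyT2 w P (Z j))
      \<longlonglongrightarrow> 0 + \<i> * complex_of_real ((sp - sm) * (poly P t * exp (- t\<^sup>2)))"
    unfolding decomp by (rule tendsto_add)
  then show ?thesis unfolding Z_def by simp
qed

end

locale jump_weight =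
  fixes m :: nat and c wh :: "nat \<Rightarrow> real" and x :: real
  assumes c1: "c 1 = 0"
    and c_mono: "\<And>i j. 1 \<le> i \<Longrightarrow> i < j \<Longrightarrow> j \<le> m \<Longrightarrow> c i < c j"
    and wh0: "wh 0 = 1"
    and wh_nonneg: "\<And>i. 1 \<le> i \<Longrightarrow> i \<le> m \<Longrightarrow> 0 \<le> wh i"
begin

definition step_factor :: "real \<Rightarrow> real" where
  "step_factor s = 1 + (\<Sum>k=1..m. jump wh k * theta (s - tpt c x k))"

definition total_variation :: real where
  "total_variation = 1 + (\<Sum>k=1..m. \<bar>jump wh k\<bar>)"

lemma weight_eq_step_factor: "weight m c wh x s = exp (- s\<^sup>2) * step_factor s"
  unfolding weight_def step_factor_def ..

lemma c_nonneg: "1 \<le> k \<Longrightarrow> k \<le> m \<Longrightarrow> 0 \<le> c k"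
  using c_mono[of 1 k] c1 by (cases "k = 1") auto

lemma c_mono_le: "1 \<le> i \<Longrightarrow> i \<le> j \<Longrightarrow> j \<le> m \<Longrightarrow> c i \<le> c j"
  using c_mono[of i j] by (cases "i = j") auto

lemma c_inj: "1 \<le> j \<Longrightarrow> j \<le> m \<Longrightarrow> 1 \<le> k \<Longrightarrow> k \<le> m \<Longrightarrow> j \<noteq> k \<Longrightarrow> c j \<noteq> c k"
  using c_mono[of j k] c_mono[of k j] by (cases "j < k") auto

lemma abs_step_factor_le: "\<bar>step_factor s\<bar> \<le> total_variation"
proof -
  have "\<bar>\<Sum>k=1..m. jump wh k * theta (s - tpt c x k)\<bar> \<le> (\<Sum>k=1..m. \<bar>jump wh k\<bar>)"
    by (rule order.trans[OF sum_abs sum_mono]) (auto simp: abs_mult theta_def)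
  then show ?thesis unfolding step_factor_def total_variation_def by linarith
qed

text \<open>The jumps telescope: as the \<open>t\<^sub>k\<close> increase, those left of \<open>s\<close> are \<open>t\<^sub>1, \<dots>, t\<^sub>J\<close>.\<close>

lemma step_factor_telescope:
  "M \<le> m \<Longrightarrow> \<exists>J\<le>M. 1 + (\<Sum>k=1..M. jump wh k * theta (s - tpt c x k)) = wh J \<and>
      (\<forall>k. 1 \<le> k \<and> k \<le> M \<longrightarrow> (tpt c x k < s \<longleftrightarrow> k \<le> J))"
proof (induction M)
  case (Suc M)
  then obtain J where J: "J \<le> M" "1 + (\<Sum>k=1..M. jump wh k * theta (s - tpt c x k)) = wh J"
    "\<And>k. 1 \<le> k \<Longrightarrow> k \<le> M \<Longrightarrow> (tpt c x k < s \<longleftrightarrow> k \<le> J)" by auto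
  have sum_Suc: "1 + (\<Sum>k=1..Suc M. jump wh k * theta (s - tpt c x k))
      = wh J + jump wh (Suc M) * theta (s - tpt c x (Suc M))"
    using J(2) by simp
  show ?case
  proof (cases "tpt c x (Suc M) < s")
    case True
    have "J = M"
    proof (cases "M = 0")
      case False
      then have "tpt c x M < s"
        using c_mono[of M "Suc M"] Suc.prems True by (simp add: tpt_def)
      then show ?thesis using J(1) J(3)[of M] False by auto
    qed (use J(1) in simp)
    then have "1 + (\<Sum>k=1..Suc M. jump wh k * theta (s - tpt c x k)) = wh (Suc M)"
      unfolding sum_Suc using True by (simp add: theta_def jump_def)
    moreover have "tpt c x k < s" if "1 \<le> k" "k \<le> Suc M" for k
      using c_mono_le[of k "Suc M"] that Suc.prems True by (auto simp: tpt_def)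
    ultimately show ?thesis by blast
  next
    case False
    then have "1 + (\<Sum>k=1..Suc M. jump wh k * theta (s - tpt c x k)) = wh J"
      unfolding sum_Suc by (simp add: theta_def)
    moreover have "\<forall>k. 1 \<le> k \<and> k \<le> Suc M \<longrightarrow> (tpt c x k < s \<longleftrightarrow> k \<le> J)"
      using J(1) J(3) False by (auto simp: le_Suc_eq)
    ultimately show ?thesis using J(1) by (intro exI[of _ J]) auto
  qed
qed (use wh0 in auto)

lemma step_factor_nonneg: "0 \<le> step_factor s"
proof -
  obtain J where "J \<le> m" "step_factor s = wh J"
    using step_factor_telescope[of m s] unfolding step_factor_def by auto
  then show ?thesis using wh_nonneg[of J] wh0 by (cases "J = 0") auto
qed

lemma step_factor_left:
  assumes "s < x"
  shows "step_factor s = 1"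
proof -
  have "theta (s - tpt c x k) = 0" if "k \<in> {1..m}" for k
    using c_nonneg[of k] that assms by (auto simp: theta_def tpt_def)
  then show ?thesis unfolding step_factor_def by (auto intro!: sum.neutral)
qed

lemma gauss_weight_weight: "gauss_weight (weight m c wh x) total_variation x"
proof
  show "weight m c wh x \<in> borel_measurable lborel"
    unfolding weight_eq_step_factor step_factor_def theta_def by measurable
  fix s
  show "\<bar>weight m c wh x s\<bar> \<le> total_variation * exp (- s\<^sup>2)"
    unfolding weight_eq_step_factor using abs_step_factor_le[of s] by (simp add: abs_mult mult.commute)
  show "0 \<le> weight m c wh x s"
    unfolding weight_eq_step_factor using step_factor_nonneg by simp
  assume "s < x"
  then show "0 < weight m c wh x s"
    unfolding weight_eq_step_factor using step_factor_left by simp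
qed

lemma weight_near_jump:
  assumes k: "1 \<le> k" "k \<le> m"
  obtains d sm where "0 < d"
    "\<And>s. tpt c x k - d < s \<Longrightarrow> s < tpt c x k \<Longrightarrow> weight m c wh x s = exp (- s\<^sup>2) * sm"
    "\<And>s. tpt c x k < s \<Longrightarrow> s < tpt c x k + d \<Longrightarrow> weight m c wh x s = exp (- s\<^sup>2) * (sm + jump wh k)"
proof -
  define D where "D = insert 1 ((\<lambda>j. \<bar>c j - c k\<bar>) ` ({1..m} - {k}))"
  define d where "d = Min D"
  have "finite D" "D \<noteq> {}" "\<forall>v\<in>D. 0 < v"
    unfolding D_def using c_inj k by auto
  then have "0 < d" unfolding d_def by auto
  have d_le: "d \<le> \<bar>c j - c k\<bar>" if "j \<in> {1..m} - {k}" for j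
    unfolding d_def using \<open>finite D\<close> that by (intro Min_le) (auto simp: D_def)
  define sm where "sm = 1 + (\<Sum>j\<in>{1..m} - {k}. jump wh j * theta (tpt c x k - tpt c x j))"
  have step_factor_near: "step_factor s = sm + jump wh k * theta (s - tpt c x k)"
    if s: "\<bar>s - tpt c x k\<bar> < d" for s
  proof -
    have "theta (s - tpt c x j) = theta (tpt c x k - tpt c x j)" if "j \<in> {1..m} - {k}" for j
      using d_le[OF that] s unfolding theta_def tpt_def by (auto simp: abs_if split: if_splits)
    then have "(\<Sum>j\<in>{1..m} - {k}. jump wh j * theta (s - tpt c x j))
        = (\<Sum>j\<in>{1..m} - {k}. jump wh j * theta (tpt c x k - tpt c x j))"
      by (intro sum.cong) auto
    moreover have "(\<Sum>j=1..m. jump wh j * theta (s - tpt c x j))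
        = jump wh k * theta (s - tpt c x k) + (\<Sum>j\<in>{1..m} - {k}. jump wh j * theta (s - tpt c x j))"
      using k by (subst sum.remove[of _ k]) auto
    ultimately show ?thesis unfolding step_factor_def sm_def by simp
  qed
  show ?thesis
  proof (rule that[OF \<open>0 < d\<close>])
    fix s assume "tpt c x k - d < s" "s < tpt c x k"
    then show "weight m c wh x s = exp (- s\<^sup>2) * sm"
      unfolding weight_eq_step_factor using step_factor_near[of s] by (simp add: theta_def abs_if)
  next
    fix s assume "tpt c x k < s" "s < tpt c x k + d"
    then show "weight m c wh x s = exp (- s\<^sup>2) * (sm + jump wh k)"
      unfolding weight_eq_step_factor using step_factor_near[of s] by (simp add: theta_def abs_if)
  qed
qed

end

lemma tendsto_poly_over_power:
  fixes R :: "complex poly" and Z :: "nat \<Rightarrow> complex"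
  assumes "degree R \<le> d" "(\<lambda>j. inverse (Z j)) \<longlonglongrightarrow> 0" "\<And>j. Z j \<noteq> 0"
  shows "(\<lambda>j. poly R (Z j) / Z j ^ d) \<longlonglongrightarrow> coeff R d"
proof -
  have poly_R: "poly R z = (\<Sum>i\<le>d. coeff R i * z ^ i)" for z
    unfolding poly_altdef using assms(1) by (intro sum.mono_neutral_left) (auto simp: coeff_eq_0)
  have eq: "poly R (Z j) / Z j ^ d = (\<Sum>i\<le>d. coeff R i * inverse (Z j) ^ (d - i))" for j
    unfolding poly_R sum_divide_distrib
  proof (intro sum.cong refl)
    fix i assume "i \<in> {..d}"
    then have "Z j ^ d = Z j ^ i * Z j ^ (d - i)" by (simp flip: power_add)
    then show "coeff R i * Z j ^ i / Z j ^ d = coeff R i * inverse (Z j) ^ (d - i)"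
      using assms(3)[of j] by (simp add: field_simps power_inverse)
  qed
  have "(\<lambda>j. \<Sum>i\<le>d. coeff R i * inverse (Z j) ^ (d - i)) \<longlonglongrightarrow> (\<Sum>i\<le>d. coeff R i * 0 ^ (d - i))"
    using assms(2) by (intro tendsto_intros)
  also have "(\<Sum>i\<le>d. coeff R i * (0::complex) ^ (d - i)) = coeff R d"
    by (subst sum.remove[of _ d]) (auto intro!: sum.neutral)
  finally show ?thesis unfolding eq .
qed

lemma tendsto_cpoly_over_power:
  fixes P :: "real poly" and Z :: "nat \<Rightarrow> complex"
  assumes "degree P \<le> d" "(\<lambda>j. inverse (Z j)) \<longlonglongrightarrow> 0" "\<And>j. Z j \<noteq> 0"
  shows "(\<lambda>j. cpoly P (Z j) / Z j ^ d) \<longlonglongrightarrow> complex_of_real (coeff P d)"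
  using tendsto_poly_over_power[of "map_poly complex_of_real P" d Z] assms unfolding cpoly_def
  by (simp add: degree_map_poly coeff_map_poly)

lemma tendsto_pderiv_over_power:
  fixes P :: "real poly" and Z :: "nat \<Rightarrow> complex"
  assumes "degree P \<le> d" "(\<lambda>j. inverse (Z j)) \<longlonglongrightarrow> 0" "\<And>j. Z j \<noteq> 0"
  shows "(\<lambda>j. poly (pderiv (map_poly complex_of_real P)) (Z j) / Z j ^ d) \<longlonglongrightarrow> 0"
proof -
  have "degree (pderiv (map_poly complex_of_real P)) \<le> d"
    using assms(1) by (simp add: degree_pderiv degree_map_poly)
  moreover have "coeff (pderiv (map_poly complex_of_real P)) d = 0"
    using assms(1) by (simp add: coeff_pderiv coeff_eq_0 degree_map_poly)
  ultimately show ?thesis using tendsto_poly_over_power[OF _ assms(2,3)] by metis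
qed

lemma has_field_derivative_cpoly:
  "(cpoly P has_field_derivative poly (pderiv (map_poly complex_of_real P)) u) (at u)"
  unfolding cpoly_def[abs_def] by (rule poly_DERIV)

lemma cpoly_of_real: "cpoly P (complex_of_real r) = complex_of_real (poly P r)"
  unfolding cpoly_def by (induction P) (auto simp: map_poly_pCons)

lemma tendsto_cpoly: "(Z \<longlongrightarrow> z0) F \<Longrightarrow> ((\<lambda>j. cpoly P (Z j)) \<longlongrightarrow> cpoly P z0) F"
  unfolding cpoly_def by (rule tendsto_poly)

lemma mat2_nth:
  "mat2 a b c d $ 1 $ 1 = a" "mat2 a b c d $ 1 $ 2 = b" "mat2 a b c d $ 2 $ 1 = c" "mat2 a b c d $ 2 $ 2 = d"
  by (simp_all add: mat2_def)

lemma mat2_mult: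
  "mat2 a b c d ** mat2 e f g h = mat2 (a * e + b * g) (a * f + b * h) (c * e + d * g) (c * f + d * h)"
  unfolding matrix_matrix_mult_def by (simp add: vec_eq_iff forall_2 sum_2 mat2_nth)

lemma mat2_add: "mat2 a b c d + mat2 e f g h = mat2 (a + e) (b + f) (c + g) (d + h)"
  by (simp add: vec_eq_iff forall_2 mat2_nth)

lemma mat2_sum:
  "(\<Sum>k\<in>A. mat2 (f1 k) (f2 k) (f3 k) (f4 k)) = mat2 (\<Sum>k\<in>A. f1 k) (\<Sum>k\<in>A. f2 k) (\<Sum>k\<in>A. f3 k) (\<Sum>k\<in>A. f4 k)"
proof (induction A rule: infinite_finite_induct)
  case (insert a A)
  then show ?case by (simp add: mat2_add)
qed (simp_all add: mat2_def vec_eq_iff)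

locale lax_system = jump_weight +
  fixes n :: nat and y :: complex and a b :: "nat \<Rightarrow> complex"
  assumes n: "1 \<le> n" and y_nonzero: "y \<noteq> 0"
    and lax: "\<And>z. Im z \<noteq> 0 \<Longrightarrow> \<forall>i j.
        ((\<lambda>\<zeta>. Phi m c wh n \<zeta> x $ i $ j) has_field_derivative
           (Alax m c n y a b z x ** Phi m c wh n z x) $ i $ j) (at z)"
begin

sublocale W: gauss_weight "weight m c wh x" total_variation x
  by (rule gauss_weight_weight)

abbreviation "wx \<equiv> weight m c wh x"
definition "p = OP wx n"
definition "q = OP wx (n - 1)"
definition "hp = hnorm wx n"
definition "hq = hnorm wx (n - 1)"
definition "X = complex_of_real x"
definition "ea = complex_of_real (exp (x\<^sup>2 / 2))"
definition "ema = complex_of_real (exp (- (x\<^sup>2 / 2)))"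
definition "E z = exp ((z + X)\<^sup>2 / 2)" for z
definition "Em z = exp (- (z + X)\<^sup>2 / 2)" for z
definition "tpi = 2 * complex_of_real pi * \<i>"
text \<open>Conjugation by \<open>\<sigma>\<^sub>1\<close> swaps both the rows and the columns of \<open>Y\<close>: the first row of
  \<open>\<Phi>\<close> is built from \<open>P\<^sub>n\<^sub>-\<^sub>1\<close>, the second from \<open>P\<^sub>n\<close>.\<close>

definition "Phi11 z = ema * (- cauchyT wx q (z + X) / complex_of_real hq) * E z" for z
definition "Phi12 z = ema * (- tpi / complex_of_real hq * cpoly q (z + X)) * Em z" for z
definition "Phi21 z = ea * (cauchyT wx p (z + X) / tpi) * E z" for z
definition "Phi22 z = ea * cpoly p (z + X) * Em z" for z
definition "sum_ab = (\<Sum>k=1..m. a k * b k)"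
definition "A11 z = z + X + (\<Sum>k=1..m. a k * b k / (z - complex_of_real (c k)))" for z
definition "A12 z = y + (\<Sum>k=1..m. a k * y / (z - complex_of_real (c k)))" for z
definition "A21 z = - 2 * (sum_ab + of_nat n) / y + (\<Sum>k=1..m. - a k * (b k)\<^sup>2 / y / (z - complex_of_real (c k)))" for z
definition "A22 z = - (z + X) + (\<Sum>k=1..m. - a k * b k / (z - complex_of_real (c k)))" for z

lemma hq_pos: "0 < hq" and hp_pos: "0 < hp"
  unfolding hq_def hp_def by (rule W.hnorm_pos)+

lemma tpi_nonzero: "tpi \<noteq> 0" unfolding tpi_def by simp

lemma ea_ema: "ea * ema = 1" unfolding ea_def ema_def by (simp flip: of_real_mult add: exp_minus field_simps)

lemma E_Em: "E z * Em z = 1" unfolding E_def Em_def by (simp flip: exp_add)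

lemma Phi_eq_mat2: "Phi m c wh n z x = mat2 (Phi11 z) (Phi12 z) (Phi21 z) (Phi22 z)"
  unfolding Phi_def sigma1_def expsig3_def Ymat_def mat2_mult
    Phi11_def Phi12_def Phi21_def Phi22_def ea_def ema_def E_def Em_def X_def tpi_def p_def q_def hq_def
  by (simp add: exp_of_real[symmetric])

lemma Alax_eq_mat2: "Alax m c n y a b z x = mat2 (A11 z) (A12 z) (A21 z) (A22 z)"
  unfolding Alax_def mat2_sum mat2_add A11_def A12_def A21_def A22_def sum_ab_def X_def by simp

lemma A22_eq_minus_A11: "A22 z = - A11 z"
  unfolding A22_def A11_def by (simp add: sum_negf)

lemma has_field_derivative_Phi_entries:
  assumes "Im z \<noteq> 0"
  shows "(Phi11 has_field_derivative A11 z * Phi11 z + A12 z * Phi21 z) (at z)"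
    and "(Phi12 has_field_derivative A11 z * Phi12 z + A12 z * Phi22 z) (at z)"
    and "(Phi21 has_field_derivative A21 z * Phi11 z + A22 z * Phi21 z) (at z)"
    and "(Phi22 has_field_derivative A21 z * Phi12 z + A22 z * Phi22 z) (at z)"
proof -
  note L = lax[OF assms]
  have f: "(\<lambda>\<zeta>. Phi m c wh n \<zeta> x $ 1 $ 1) = Phi11" "(\<lambda>\<zeta>. Phi m c wh n \<zeta> x $ 1 $ 2) = Phi12"
          "(\<lambda>\<zeta>. Phi m c wh n \<zeta> x $ 2 $ 1) = Phi21" "(\<lambda>\<zeta>. Phi m c wh n \<zeta> x $ 2 $ 2) = Phi22"
    unfolding Phi_eq_mat2 mat2_nth by auto
  have v: "Alax m c n y a b z x ** Phi m c wh n z x = mat2 (A11 z * Phi11 z + A12 z * Phi21 z) (A11 z * Phi12 z + A12 z * Phi22 z)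
        (A21 z * Phi11 z + A22 z * Phi21 z) (A21 z * Phi12 z + A22 z * Phi22 z)"
    unfolding Phi_eq_mat2 Alax_eq_mat2 mat2_mult ..
  show "(Phi11 has_field_derivative A11 z * Phi11 z + A12 z * Phi21 z) (at z)"
    using L[rule_format, of 1 1] unfolding f v mat2_nth .
  show "(Phi12 has_field_derivative A11 z * Phi12 z + A12 z * Phi22 z) (at z)"
    using L[rule_format, of 1 2] unfolding f v mat2_nth .
  show "(Phi21 has_field_derivative A21 z * Phi11 z + A22 z * Phi21 z) (at z)"
    using L[rule_format, of 2 1] unfolding f v mat2_nth .
  show "(Phi22 has_field_derivative A21 z * Phi12 z + A22 z * Phi22 z) (at z)"
    using L[rule_format, of 2 2] unfolding f v mat2_nth .
qed

lemma has_field_derivative_cauchyT_shift: assumes "Im (z + X) \<noteq> 0"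
  shows "((\<lambda>z. cauchyT wx P (z + X)) has_field_derivative cauchyT2 wx P (z + X)) (at z)"
  using DERIV_chain2[OF W.has_field_derivative_cauchyT[OF assms] DERIV_add[OF DERIV_ident DERIV_const]] by simp

lemma Im_shift_X: "Im (z + X) = Im z" unfolding X_def by simp

lemma has_field_derivative_E: "(E has_field_derivative E z * (z + X)) (at z)"
  unfolding E_def[abs_def] by (auto intro!: derivative_eq_intros simp: power2_eq_square algebra_simps)

lemma has_field_derivative_Em: "(Em has_field_derivative - (Em z * (z + X))) (at z)"
proof -
  have "((\<lambda>z. - (z + X)\<^sup>2 / 2) has_field_derivative - (z + X)) (at z)"
    by (auto intro!: derivative_eq_intros simp: power2_eq_square field_simps)
  from DERIV_chain2[OF DERIV_exp this] show ?thesis unfolding Em_def[abs_def]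
    by (rule DERIV_cong) (simp add: algebra_simps)
qed

lemma has_field_derivative_cpoly_shift: "((\<lambda>z. cpoly P (z + X)) has_field_derivative poly (pderiv (map_poly complex_of_real P)) (z + X)) (at z)"
  using DERIV_chain2[OF has_field_derivative_cpoly DERIV_add[OF DERIV_ident DERIV_const]] by simp

lemma Phi11_ode: assumes "Im z \<noteq> 0"
  shows "ema * (- (cauchyT2 wx q (z + X) + (z + X) * cauchyT wx q (z + X)) / complex_of_real hq) * E z = A11 z * Phi11 z + A12 z * Phi21 z"
proof -
  have "(Phi11 has_field_derivative ema * (- (cauchyT2 wx q (z + X) + (z + X) * cauchyT wx q (z + X)) / complex_of_real hq) * E z) (at z)"
  proof -
    have "(Phi11 has_field_derivative ema * (- cauchyT2 wx q (z + X) / complex_of_real hq) * E z + E z * (z + X) * (ema * (- cauchyT wx q (z + X) / complex_of_real hq))) (at z)"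
      unfolding Phi11_def[abs_def]
      by (rule DERIV_mult[OF DERIV_cmult[OF DERIV_cdivide[OF DERIV_minus[OF has_field_derivative_cauchyT_shift]]] has_field_derivative_E]) (use assms Im_shift_X in auto)
    then show ?thesis by (rule DERIV_cong) (use hq_pos tpi_nonzero in \<open>simp add: field_simps\<close>)
  qed
  then show ?thesis using has_field_derivative_Phi_entries(1)[OF assms] by (rule DERIV_unique)
qed

lemma Phi21_ode: assumes "Im z \<noteq> 0"
  shows "ea * ((cauchyT2 wx p (z + X) + (z + X) * cauchyT wx p (z + X)) / tpi) * E z = A21 z * Phi11 z + A22 z * Phi21 z"
proof -
  have "(Phi21 has_field_derivative ea * ((cauchyT2 wx p (z + X) + (z + X) * cauchyT wx p (z + X)) / tpi) * E z) (at z)"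
  proof -
    have "(Phi21 has_field_derivative ea * (cauchyT2 wx p (z + X) / tpi) * E z + E z * (z + X) * (ea * (cauchyT wx p (z + X) / tpi))) (at z)"
      unfolding Phi21_def[abs_def]
      by (rule DERIV_mult[OF DERIV_cmult[OF DERIV_cdivide[OF has_field_derivative_cauchyT_shift]] has_field_derivative_E]) (use assms Im_shift_X in auto)
    then show ?thesis by (rule DERIV_cong) (use hq_pos tpi_nonzero in \<open>simp add: field_simps\<close>)
  qed
  then show ?thesis using has_field_derivative_Phi_entries(3)[OF assms] by (rule DERIV_unique)
qed

lemma Phi12_ode: assumes "Im z \<noteq> 0"
  shows "ema * (- tpi / complex_of_real hq) * (poly (pderiv (map_poly complex_of_real q)) (z + X) - (z + X) * cpoly q (z + X)) * Em z = A11 z * Phi12 z + A12 z * Phi22 z"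
proof -
  have "(Phi12 has_field_derivative ema * (- tpi / complex_of_real hq) * (poly (pderiv (map_poly complex_of_real q)) (z + X) - (z + X) * cpoly q (z + X)) * Em z) (at z)"
  proof -
    have "(Phi12 has_field_derivative ema * (- tpi / complex_of_real hq * poly (pderiv (map_poly complex_of_real q)) (z + X)) * Em z + (- (Em z * (z + X))) * (ema * (- tpi / complex_of_real hq * cpoly q (z + X)))) (at z)"
      unfolding Phi12_def[abs_def]
      by (rule DERIV_mult[OF DERIV_cmult[OF DERIV_cmult[OF has_field_derivative_cpoly_shift]] has_field_derivative_Em])
    then show ?thesis by (rule DERIV_cong) (use hq_pos tpi_nonzero in \<open>simp add: field_simps\<close>)
  qed
  then show ?thesis using has_field_derivative_Phi_entries(2)[OF assms] by (rule DERIV_unique)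
qed

definition "z_up j = \<i> * complex_of_real (real (Suc j))" for j

lemma Im_z_up: "Im (z_up j) = real (Suc j)" and Im_z_up_X: "Im (z_up j + X) = real (Suc j)"
  unfolding z_up_def X_def by simp_all

lemma Im_z_up_nonzero: "Im (z_up j) \<noteq> 0" "Im (z_up j + X) \<noteq> 0" using Im_z_up Im_z_up_X by auto

lemma z_up_X_to_infinity: "(\<lambda>j. inverse (z_up j + X)) \<longlonglongrightarrow> 0" "\<And>j. z_up j + X \<noteq> 0"
  using tendsto_inverse_0_vertical[OF Im_z_up_X] Im_z_up_X by (auto simp: complex_eq_iff)

lemma tendsto_div_z_up_minus: "(\<lambda>j. C / (z_up j - complex_of_real r)) \<longlonglongrightarrow> 0"
proof -
  have "(\<lambda>j. inverse (z_up j - complex_of_real r)) \<longlonglongrightarrow> 0"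
    by (rule tendsto_inverse_0_vertical) (simp add: z_up_def)
  then show ?thesis unfolding divide_inverse by (rule tendsto_mult_right_zero)
qed

lemma deg_p: "degree p = n" and deg_q: "degree q = n - 1"
  and lc_p: "coeff p n = 1" and lc_q: "coeff q (n - 1) = 1"
  unfolding p_def q_def using W.degree_OP W.lead_coeff_OP by metis+

lemma moment_p_below: "i < n \<Longrightarrow> W.moment p i = 0" and moment_q_below: "i < n - 1 \<Longrightarrow> W.moment q i = 0"
  unfolding p_def q_def by (auto intro: W.moment_OP_below)

lemma moment_p_self: "W.moment p n = hp" and moment_q_self: "W.moment q (n - 1) = hq"
  unfolding p_def q_def hp_def hq_def by (rule W.moment_OP_self)+

lemma moment_sum_q: "(\<Sum>i<n. \<zeta>^(n - 1 - i) * complex_of_real (W.moment q i)) = complex_of_real hq"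
proof -
  have "(\<Sum>i<n. \<zeta>^(n - 1 - i) * complex_of_real (W.moment q i)) = \<zeta>^(n - 1 - (n - 1)) * complex_of_real (W.moment q (n - 1))"
    using n by (subst sum.remove[of _ "n - 1"]) (auto intro!: sum.neutral moment_q_below)
  then show ?thesis using moment_q_self by simp
qed

lemma moment_sum_p: "(\<Sum>i<Suc n. \<zeta>^(Suc n - 1 - i) * complex_of_real (W.moment p i)) = complex_of_real hp"
proof -
  have "(\<Sum>i<Suc n. \<zeta>^(Suc n - 1 - i) * complex_of_real (W.moment p i)) = \<zeta>^(Suc n - 1 - n) * complex_of_real (W.moment p n)"
    by (subst sum.remove[of _ n]) (auto intro!: sum.neutral moment_p_below)
  then show ?thesis using moment_p_self by simp
qed

lemma tendsto_power_n_cauchyT_q: "(\<lambda>j. (z_up j + X)^n * cauchyT wx q (z_up j + X)) \<longlonglongrightarrow> - complex_of_real hq"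
proof -
  have "(z_up j + X)^n * cauchyT wx q (z_up j + X) = cauchyT wx (monom 1 n * q) (z_up j + X) - complex_of_real hq" for j
    using W.power_mult_cauchyT[OF Im_z_up_nonzero(2), where d=n and P=q] moment_sum_q by simp
  moreover have "(\<lambda>j. cauchyT wx (monom 1 n * q) (z_up j + X) - complex_of_real hq) \<longlonglongrightarrow> 0 - complex_of_real hq"
    by (intro tendsto_intros W.tendsto_cauchyT_0_vertical Im_z_up_X)
  ultimately show ?thesis by simp
qed

lemma tendsto_power_Suc_n_cauchyT_p: "(\<lambda>j. (z_up j + X)^(Suc n) * cauchyT wx p (z_up j + X)) \<longlonglongrightarrow> - complex_of_real hp"
proof -
  have "(z_up j + X)^(Suc n) * cauchyT wx p (z_up j + X) = cauchyT wx (monom 1 (Suc n) * p) (z_up j + X) - complex_of_real hp" for j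
    using W.power_mult_cauchyT[OF Im_z_up_nonzero(2), where d="Suc n" and P=p] moment_sum_p by simp
  moreover have "(\<lambda>j. cauchyT wx (monom 1 (Suc n) * p) (z_up j + X) - complex_of_real hp) \<longlonglongrightarrow> 0 - complex_of_real hp"
    by (intro tendsto_intros W.tendsto_cauchyT_0_vertical Im_z_up_X)
  ultimately show ?thesis by simp
qed

lemma tendsto_power_n_cauchyT_p: "(\<lambda>j. (z_up j + X)^n * cauchyT wx p (z_up j + X)) \<longlonglongrightarrow> 0"
  using W.tendsto_power_mult_cauchyT_0_vertical[OF Im_z_up_X, of n p] moment_p_below by simp

lemma tendsto_power_pred_n_cauchyT_p: "(\<lambda>j. (z_up j + X)^(n - 1) * cauchyT wx p (z_up j + X)) \<longlonglongrightarrow> 0"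
  using W.tendsto_power_mult_cauchyT_0_vertical[OF Im_z_up_X, of "n - 1" p] moment_p_below by simp

lemma tendsto_power_n_cauchyT2_p: "(\<lambda>j. (z_up j + X)^n * cauchyT2 wx p (z_up j + X)) \<longlonglongrightarrow> 0"
proof -
  have eq: "(z_up j + X)^n * cauchyT2 wx p (z_up j + X) = cauchyT2 wx (monom 1 n * p) (z_up j + X) -
      (\<Sum>i<n. inverse (z_up j + X) * ((z_up j + X)^(n - i) * cauchyT wx (monom 1 i * p) (z_up j + X)))" for j
  proof -
    have "(z_up j + X)^(n - 1 - i) = inverse (z_up j + X) * (z_up j + X)^(n - i)" if "i < n" for i
    proof -
      have "n - i = Suc (n - 1 - i)" using that by simp
      then show ?thesis using z_up_X_to_infinity(2)[of j] by simp
    qed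
    then show ?thesis using W.power_mult_cauchyT2[OF Im_z_up_nonzero(2), where d=n and P=p] by (simp add: mult.assoc)
  qed
  have lim_i: "(\<lambda>j. (z_up j + X)^(n - i) * cauchyT wx (monom 1 i * p) (z_up j + X)) \<longlonglongrightarrow> 0" if "i < n" for i
  proof (rule W.tendsto_power_mult_cauchyT_0_vertical[OF Im_z_up_X])
    fix l assume "l < n - i"
    then show "W.moment (monom 1 i * p) l = 0" using moment_p_below[of "i + l"] W.moment_monom_mult by simp
  qed
  have "(\<lambda>j. cauchyT2 wx (monom 1 n * p) (z_up j + X) -
      (\<Sum>i<n. inverse (z_up j + X) * ((z_up j + X)^(n - i) * cauchyT wx (monom 1 i * p) (z_up j + X)))) \<longlonglongrightarrow> 0 - (\<Sum>i<n. 0 * 0)"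
    using lim_i by (intro tendsto_intros W.tendsto_cauchyT2_0_vertical Im_z_up_X z_up_X_to_infinity tendsto_sum) auto
  then show ?thesis unfolding eq by simp
qed

lemma tendsto_poly_ratios:
  "(\<lambda>j. cpoly p (z_up j + X) / (z_up j + X)^n) \<longlonglongrightarrow> 1"
  "(\<lambda>j. cpoly q (z_up j + X) / (z_up j + X)^(n - 1)) \<longlonglongrightarrow> 1"
  "(\<lambda>j. cpoly q (z_up j + X) / (z_up j + X)^n) \<longlonglongrightarrow> 0"
  "(\<lambda>j. poly (pderiv (map_poly complex_of_real q)) (z_up j + X) / (z_up j + X)^n) \<longlonglongrightarrow> 0"
proof -
  show "(\<lambda>j. cpoly p (z_up j + X) / (z_up j + X)^n) \<longlonglongrightarrow> 1"
    using tendsto_cpoly_over_power[of p n, OF _ z_up_X_to_infinity] deg_p lc_p by simp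
  show "(\<lambda>j. cpoly q (z_up j + X) / (z_up j + X)^(n - 1)) \<longlonglongrightarrow> 1"
    using tendsto_cpoly_over_power[of q "n - 1", OF _ z_up_X_to_infinity] deg_q lc_q by simp
  show "(\<lambda>j. cpoly q (z_up j + X) / (z_up j + X)^n) \<longlonglongrightarrow> 0"
    using tendsto_cpoly_over_power[of q n, OF _ z_up_X_to_infinity] deg_q n by (simp add: coeff_eq_0)
  show "(\<lambda>j. poly (pderiv (map_poly complex_of_real q)) (z_up j + X) / (z_up j + X)^n) \<longlonglongrightarrow> 0"
    using tendsto_pderiv_over_power[of q n, OF _ z_up_X_to_infinity] deg_q by simp
qed

lemma det_Phi_eq: "Phi11 z * Phi22 z - Phi12 z * Phi21 z =
    (cpoly q (z + X) * cauchyT wx p (z + X) - cpoly p (z + X) * cauchyT wx q (z + X)) / complex_of_real hq"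
proof -
  have "Phi11 z * Phi22 z - Phi12 z * Phi21 z = (ea * ema) * (E z * Em z) *
    ((cpoly q (z + X) * cauchyT wx p (z + X) - cpoly p (z + X) * cauchyT wx q (z + X)) / complex_of_real hq)"
    unfolding Phi11_def Phi12_def Phi21_def Phi22_def using tpi_nonzero hq_pos by (simp add: field_simps)
  then show ?thesis unfolding ea_ema E_Em by simp
qed

lemma det_Phi_eq_1: assumes "0 < Im z" shows "Phi11 z * Phi22 z - Phi12 z * Phi21 z = 1"
proof -
  define D where "D z = Phi11 z * Phi22 z - Phi12 z * Phi21 z" for z
  have "\<exists>C. \<forall>z\<in>{z. 0 < Im z}. D z = C"
  proof (rule has_field_derivative_zero_constant)
    show "convex {z. 0 < Im z}" by (rule convex_halfspace_Im_gt)
    fix z assume "z \<in> {z. 0 < Im z}"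
    then have z: "Im z \<noteq> 0" by simp
    have "(D has_field_derivative
      ((A11 z * Phi11 z + A12 z * Phi21 z) * Phi22 z + (A21 z * Phi12 z + A22 z * Phi22 z) * Phi11 z -
       ((A11 z * Phi12 z + A12 z * Phi22 z) * Phi21 z + (A21 z * Phi11 z + A22 z * Phi21 z) * Phi12 z))) (at z)"
      unfolding D_def[abs_def] using has_field_derivative_Phi_entries[OF z] by (intro DERIV_diff DERIV_mult)
    then have "(D has_field_derivative 0) (at z)"
      by (rule DERIV_cong) (simp add: A22_eq_minus_A11 algebra_simps)
    then show "(D has_field_derivative 0) (at z within {z. 0 < Im z})"
      by (rule has_field_derivative_at_within)
  qed
  then obtain C where C: "\<And>z. 0 < Im z \<Longrightarrow> D z = C" by auto
  have eq: "D (z_up j) = ((cpoly q (z_up j + X) / (z_up j + X)^(n - 1)) * ((z_up j + X)^(n - 1) * cauchyT wx p (z_up j + X))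
      - (cpoly p (z_up j + X) / (z_up j + X)^n) * ((z_up j + X)^n * cauchyT wx q (z_up j + X))) / complex_of_real hq" for j
    unfolding D_def det_Phi_eq using z_up_X_to_infinity(2)[of j] by simp
  have "(\<lambda>j. D (z_up j)) \<longlonglongrightarrow> (1 * 0 - 1 * (- complex_of_real hq)) / complex_of_real hq"
    unfolding eq using hq_pos by (intro tendsto_intros tendsto_poly_ratios tendsto_power_pred_n_cauchyT_p tendsto_power_n_cauchyT_q) auto
  then have "(\<lambda>j. D (z_up j)) \<longlonglongrightarrow> 1" using hq_pos by simp
  moreover have "D (z_up j) = C" for j using C Im_z_up[of j] by simp
  ultimately have "C = 1" using LIMSEQ_unique by fastforce
  then show ?thesis using C[OF assms] unfolding D_def by simp
qed

definition "pole_sum z = (\<Sum>k=1..m. a k * b k / (z - complex_of_real (c k)))" for z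

lemma tendsto_pole_sum_z_up: "(\<lambda>j. pole_sum (z_up j)) \<longlonglongrightarrow> 0"
proof -
  have "(\<lambda>j. pole_sum (z_up j)) \<longlonglongrightarrow> (\<Sum>k=1..m. 0)"
    unfolding pole_sum_def by (intro tendsto_sum tendsto_div_z_up_minus)
  then show ?thesis by simp
qed

lemma A11_eq_pole_sum: "A11 z = z + X + pole_sum z" unfolding A11_def pole_sum_def ..
lemma A22_eq_pole_sum: "A22 z = - (z + X) - pole_sum z" unfolding A22_def pole_sum_def by (simp add: sum_negf)

lemma tendsto_A12_z_up: "(\<lambda>j. A12 (z_up j)) \<longlonglongrightarrow> y"
proof -
  have "(\<lambda>j. A12 (z_up j)) \<longlonglongrightarrow> y + (\<Sum>k=1..m. 0)"
    unfolding A12_def by (intro tendsto_intros tendsto_sum tendsto_div_z_up_minus)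
  then show ?thesis by simp
qed

definition "A21_inf = - 2 * (sum_ab + of_nat n) / y"

lemma tendsto_A21_z_up: "(\<lambda>j. A21 (z_up j)) \<longlonglongrightarrow> A21_inf"
proof -
  have "(\<lambda>j. \<Sum>k=1..m. (- a k * (b k)\<^sup>2 / y) / (z_up j - complex_of_real (c k))) \<longlonglongrightarrow> (\<Sum>k=1..m. 0)"
    by (rule tendsto_sum) (rule tendsto_div_z_up_minus)
  then have "(\<lambda>j. A21 (z_up j)) \<longlonglongrightarrow> A21_inf + (\<Sum>k=1..m. 0)"
    unfolding A21_def A21_inf_def by (intro tendsto_add tendsto_const)
  then show ?thesis by simp
qed

lemma Em_nonzero: "Em z \<noteq> 0" and E_nonzero: "E z \<noteq> 0" unfolding Em_def E_def by simp_all

lemma y_eq: "y = 2 * ema * tpi / (complex_of_real hq * ea)"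
proof -
  define K where "K = ema * (- tpi / complex_of_real hq)"
  define Q' where "Q' = poly (pderiv (map_poly complex_of_real q))"
  define \<zeta> where "\<zeta> j = z_up j + X" for j
  obtain N where N: "n = Suc N" using n by (cases n) auto
  have ident: "K * (Q' (\<zeta> j) / (\<zeta> j * \<zeta> j ^ N) - cpoly q (\<zeta> j) / \<zeta> j ^ N)
      = (A11 (z_up j) / \<zeta> j) * K * (cpoly q (\<zeta> j) / \<zeta> j ^ N) + A12 (z_up j) * ea * (cpoly p (\<zeta> j) / (\<zeta> j * \<zeta> j ^ N))" for j
  proof -
    have "K * (Q' (\<zeta> j) - \<zeta> j * cpoly q (\<zeta> j)) * Em (z_up j) =
        (A11 (z_up j) * (K * cpoly q (\<zeta> j)) + A12 (z_up j) * (ea * cpoly p (\<zeta> j))) * Em (z_up j)"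
      using Phi12_ode[OF Im_z_up_nonzero(1)] unfolding Phi12_def Phi22_def K_def Q'_def \<zeta>_def by (simp add: algebra_simps)
    then have "K * (Q' (\<zeta> j) - \<zeta> j * cpoly q (\<zeta> j)) = A11 (z_up j) * (K * cpoly q (\<zeta> j)) + A12 (z_up j) * (ea * cpoly p (\<zeta> j))"
      using Em_nonzero by simp
    moreover have "\<zeta> j \<noteq> 0" unfolding \<zeta>_def by (rule z_up_X_to_infinity(2))
    ultimately show ?thesis by (simp add: field_simps)
  qed
  have A11_div: "A11 (z_up j) / \<zeta> j = 1 + inverse (\<zeta> j) * pole_sum (z_up j)" for j
    unfolding A11_eq_pole_sum \<zeta>_def using z_up_X_to_infinity(2)[of j] by (simp add: field_simps)
  have "(\<lambda>j. K * (Q' (\<zeta> j) / (\<zeta> j * \<zeta> j ^ N) - cpoly q (\<zeta> j) / \<zeta> j ^ N)) \<longlonglongrightarrow> K * (0 - 1)"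
    using tendsto_poly_ratios(2,4) unfolding \<zeta>_def Q'_def N by (intro tendsto_intros) auto
  moreover have "(\<lambda>j. (A11 (z_up j) / \<zeta> j) * K * (cpoly q (\<zeta> j) / \<zeta> j ^ N) + A12 (z_up j) * ea * (cpoly p (\<zeta> j) / (\<zeta> j * \<zeta> j ^ N)))
       \<longlonglongrightarrow> (1 + 0 * 0) * K * 1 + y * ea * 1"
    unfolding A11_div using tendsto_poly_ratios(1,2) z_up_X_to_infinity(1) tendsto_pole_sum_z_up tendsto_A12_z_up
    unfolding \<zeta>_def N by (intro tendsto_intros) auto
  ultimately have "K * (0 - 1) = (1 + 0 * 0) * K * 1 + y * ea * 1"
    unfolding ident by (rule LIMSEQ_unique)
  moreover have "ea \<noteq> 0" unfolding ea_def by simp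
  ultimately show ?thesis unfolding K_def using hq_pos by (simp add: field_simps)
qed

lemma Phi21_ode_scaled:
  fixes j :: nat
  defines "\<zeta> \<equiv> z_up j + X"
  shows "(ea / tpi) * (\<zeta> ^ n * cauchyT2 wx p \<zeta> + \<zeta> ^ Suc n * cauchyT wx p \<zeta>) =
     - A21 (z_up j) * (ema / complex_of_real hq) * (\<zeta> ^ n * cauchyT wx q \<zeta>) - (ea / tpi) * (\<zeta> ^ Suc n * cauchyT wx p \<zeta>)
     - pole_sum (z_up j) * (ea / tpi) * (\<zeta> ^ n * cauchyT wx p \<zeta>)"
proof -
  have "ea * ((cauchyT2 wx p \<zeta> + \<zeta> * cauchyT wx p \<zeta>) / tpi) * E (z_up j)
      = (A21 (z_up j) * (ema * (- cauchyT wx q \<zeta> / complex_of_real hq))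
         + (- \<zeta> - pole_sum (z_up j)) * (ea * (cauchyT wx p \<zeta> / tpi))) * E (z_up j)"
    using Phi21_ode[OF Im_z_up_nonzero(1), of j]
    unfolding Phi11_def Phi21_def A22_eq_pole_sum \<zeta>_def by (simp add: algebra_simps)
  then have "ea * ((cauchyT2 wx p \<zeta> + \<zeta> * cauchyT wx p \<zeta>) / tpi)
      = A21 (z_up j) * (ema * (- cauchyT wx q \<zeta> / complex_of_real hq))
        + (- \<zeta> - pole_sum (z_up j)) * (ea * (cauchyT wx p \<zeta> / tpi))" (is "?A = ?B")
    by (rule mult_right_cancel[OF E_nonzero, THEN iffD1])
  moreover have "(ea / tpi) * (\<zeta> ^ n * cauchyT2 wx p \<zeta> + \<zeta> ^ Suc n * cauchyT wx p \<zeta>)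
    - (- A21 (z_up j) * (ema / complex_of_real hq) * (\<zeta> ^ n * cauchyT wx q \<zeta>)
       - (ea / tpi) * (\<zeta> ^ Suc n * cauchyT wx p \<zeta>)
       - pole_sum (z_up j) * (ea / tpi) * (\<zeta> ^ n * cauchyT wx p \<zeta>))
    = \<zeta> ^ n * (?A - ?B)"
    by (simp add: divide_inverse algebra_simps)
  ultimately show ?thesis by simp
qed

lemma sum_ab_plus_n_eq: "sum_ab + of_nat n = complex_of_real (2 * hp / hq)"
proof -
  define \<zeta> where "\<zeta> j = z_up j + X" for j
  note ident = Phi21_ode_scaled[folded \<zeta>_def]
  have "(\<lambda>j. (ea / tpi) * (\<zeta> j ^ n * cauchyT2 wx p (\<zeta> j) + \<zeta> j ^ Suc n * cauchyT wx p (\<zeta> j)))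
          \<longlonglongrightarrow> (ea / tpi) * (0 + - complex_of_real hp)"
    unfolding \<zeta>_def by (intro tendsto_intros tendsto_power_n_cauchyT2_p tendsto_power_Suc_n_cauchyT_p)
  moreover have "(\<lambda>j. - A21 (z_up j) * (ema / complex_of_real hq) * (\<zeta> j ^ n * cauchyT wx q (\<zeta> j)) - (ea / tpi) * (\<zeta> j ^ Suc n * cauchyT wx p (\<zeta> j))
     - pole_sum (z_up j) * (ea / tpi) * (\<zeta> j ^ n * cauchyT wx p (\<zeta> j))) \<longlonglongrightarrow>
     - A21_inf * (ema / complex_of_real hq) * (- complex_of_real hq) - (ea / tpi) * (- complex_of_real hp) - 0 * (ea / tpi) * 0"
    unfolding \<zeta>_def
    by (intro tendsto_intros tendsto_A21_z_up tendsto_power_n_cauchyT_q tendsto_power_Suc_n_cauchyT_p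
        tendsto_pole_sum_z_up tendsto_power_n_cauchyT_p)
  ultimately have "(ea / tpi) * (0 + - complex_of_real hp)
      = - A21_inf * (ema / complex_of_real hq) * (- complex_of_real hq) - (ea / tpi) * (- complex_of_real hp) - 0 * (ea / tpi) * 0"
    unfolding ident by (rule LIMSEQ_unique)
  moreover have "ema \<noteq> 0" "ea \<noteq> 0" unfolding ema_def ea_def by simp_all
  ultimately have "ea * ema * (2 * complex_of_real hq) * ((sum_ab + of_nat n) * complex_of_real hq)
      = ea * ema * (2 * complex_of_real hq) * (2 * complex_of_real hp)"
    using hq_pos y_nonzero tpi_nonzero unfolding A21_inf_def by (simp add: y_eq field_simps)
  then have "(sum_ab + of_nat n) * complex_of_real hq = 2 * complex_of_real hp"
    using hq_pos \<open>ema \<noteq> 0\<close> \<open>ea \<noteq> 0\<close> by (subst (asm) mult_left_cancel) auto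
  then show ?thesis using hq_pos by (simp add: field_simps)
qed

end

lemma convergent_mult_tendsto_0: "convergent f \<Longrightarrow> g \<longlonglongrightarrow> 0 \<Longrightarrow> (\<lambda>j. f j * g j) \<longlonglongrightarrow> (0::complex)"
  unfolding convergent_def using tendsto_mult by fastforce

locale lax_system_at_jump = lax_system +
  fixes k :: nat
  assumes k: "1 \<le> k" "k \<le> m"
begin

definition "t = tpt c x k"
definition "ck = complex_of_real (c k)"
definition "eps j = 1 / real (Suc j)" for j
definition "zk j = ck + \<i> * complex_of_real (eps j)" for j
definition "omega = jump wh k"

lemma eps_pos: "0 < eps j" and eps_le_1: "eps j \<le> 1" unfolding eps_def by auto

lemma tendsto_eps: "eps \<longlonglongrightarrow> 0"
  unfolding eps_def using LIMSEQ_inverse_real_of_nat by (simp add: divide_inverse)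

lemma zk_plus_X: "zk j + X = complex_of_real t + \<i> * complex_of_real (eps j)"
  unfolding zk_def ck_def X_def t_def tpt_def by simp

lemma Im_zk: "Im (zk j) = eps j" unfolding zk_def ck_def by simp
lemma zk_pos: "0 < Im (zk j)" using Im_zk[of j] eps_pos[of j] by simp
lemma Im_zk_nonzero: "Im (zk j) \<noteq> 0" using zk_pos[of j] by simp

lemma tendsto_zk: "zk \<longlonglongrightarrow> ck"
proof -
  have "zk \<longlonglongrightarrow> ck + \<i> * complex_of_real 0" unfolding zk_def[abs_def] by (intro tendsto_intros tendsto_eps)
  then show ?thesis by simp
qed

lemma zk_minus_ck: "zk j - ck = \<i> * complex_of_real (eps j)" unfolding zk_def by simp

lemma ck_plus_X: "ck + X = complex_of_real t" unfolding ck_def X_def t_def tpt_def by simp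

lemma tendsto_eps_cauchyT_zk: "(\<lambda>j. complex_of_real (eps j) * cauchyT wx P (zk j + X)) \<longlonglongrightarrow> 0"
  unfolding zk_plus_X using W.tendsto_eps_cauchyT_0[where e=eps and t=t and P=P] eps_pos tendsto_eps by auto

lemma tendsto_eps_cauchyT2_zk: "(\<lambda>j. complex_of_real (eps j) * cauchyT2 wx P (zk j + X)) \<longlonglongrightarrow> \<i> * complex_of_real (omega * (poly P t * exp (- t\<^sup>2)))"
proof -
  obtain d sm where d: "0 < d"
    "\<And>s. t - d < s \<Longrightarrow> s < t \<Longrightarrow> wx s = exp (- s\<^sup>2) * sm"
    "\<And>s. t < s \<Longrightarrow> s < t + d \<Longrightarrow> wx s = exp (- s\<^sup>2) * (sm + jump wh k)"
    using weight_near_jump[OF k] unfolding t_def by metis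
  have "(\<lambda>j. complex_of_real (eps j) * cauchyT2 wx P (complex_of_real t + \<i> * complex_of_real (eps j)))
      \<longlonglongrightarrow> \<i> * complex_of_real ((sm + jump wh k - sm) * (poly P t * exp (- t\<^sup>2)))"
    by (rule W.tendsto_eps_cauchyT2_jump[OF eps_pos eps_le_1 tendsto_eps d(1)]) (use d in auto)
  then show ?thesis unfolding zk_plus_X omega_def by simp
qed

lemma ck_minus_c_nonzero: "i \<in> {1..m} - {k} \<Longrightarrow> ck - complex_of_real (c i) \<noteq> 0"
  unfolding ck_def using c_inj[of i k] k by auto

definition "reg11 z = z + X + (\<Sum>i\<in>{1..m} - {k}. a i * b i / (z - complex_of_real (c i)))" for z
definition "reg12 z = y + (\<Sum>i\<in>{1..m} - {k}. a i * y / (z - complex_of_real (c i)))" for z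
definition "reg21 z = - 2 * (sum_ab + of_nat n) / y + (\<Sum>i\<in>{1..m} - {k}. - a i * (b i)\<^sup>2 / y / (z - complex_of_real (c i)))" for z
definition "reg22 z = - (z + X) + (\<Sum>i\<in>{1..m} - {k}. - a i * b i / (z - complex_of_real (c i)))" for z

lemma sum_split_at_k: "(\<Sum>i=1..m. f i) = f k + (\<Sum>i\<in>{1..m} - {k}. f i)"
  using k by (subst sum.remove[of _ k]) auto

lemma A_split_pole:
  assumes "z \<noteq> ck"
  shows "(z - ck) * A11 z = a k * b k + (z - ck) * reg11 z"
    and "(z - ck) * A12 z = a k * y + (z - ck) * reg12 z"
    and "(z - ck) * A21 z = - a k * (b k)\<^sup>2 / y + (z - ck) * reg21 z"
    and "(z - ck) * A22 z = - a k * b k + (z - ck) * reg22 z"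
proof -
  have nz: "z - ck \<noteq> 0" using assms by simp
  show "(z - ck) * A11 z = a k * b k + (z - ck) * reg11 z"
    unfolding A11_def reg11_def sum_split_at_k[of "\<lambda>i. a i * b i / (z - complex_of_real (c i))"] ck_def
    using nz y_nonzero unfolding ck_def by (simp add: field_simps)
  show "(z - ck) * A12 z = a k * y + (z - ck) * reg12 z"
    unfolding A12_def reg12_def sum_split_at_k[of "\<lambda>i. a i * y / (z - complex_of_real (c i))"]
    using nz y_nonzero unfolding ck_def by (simp add: field_simps)
  show "(z - ck) * A21 z = - a k * (b k)\<^sup>2 / y + (z - ck) * reg21 z"
    unfolding A21_def reg21_def sum_split_at_k[of "\<lambda>i. - a i * (b i)\<^sup>2 / y / (z - complex_of_real (c i))"]
    using nz y_nonzero unfolding ck_def by (simp add: field_simps)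
  show "(z - ck) * A22 z = - a k * b k + (z - ck) * reg22 z"
    unfolding A22_def reg22_def sum_split_at_k[of "\<lambda>i. - a i * b i / (z - complex_of_real (c i))"]
    using nz y_nonzero unfolding ck_def by (simp add: field_simps)
qed

lemma zk_neq_ck: "zk j \<noteq> ck" using zk_minus_ck[of j] eps_pos[of j] by auto

lemma convergent_reg: "convergent (\<lambda>j. reg11 (zk j))" "convergent (\<lambda>j. reg12 (zk j))"
   "convergent (\<lambda>j. reg21 (zk j))" "convergent (\<lambda>j. reg22 (zk j))"
proof -
  have s: "(\<lambda>j. \<Sum>i\<in>{1..m} - {k}. C i / (zk j - complex_of_real (c i))) \<longlonglongrightarrow> (\<Sum>i\<in>{1..m} - {k}. C i / (ck - complex_of_real (c i)))" for C
    using ck_minus_c_nonzero by (intro tendsto_sum tendsto_intros tendsto_zk) auto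
  show "convergent (\<lambda>j. reg11 (zk j))" unfolding reg11_def
    by (rule convergentI, rule tendsto_add[OF tendsto_add[OF tendsto_zk tendsto_const] s])
  show "convergent (\<lambda>j. reg12 (zk j))" unfolding reg12_def
    by (rule convergentI, rule tendsto_add[OF tendsto_const s])
  show "convergent (\<lambda>j. reg21 (zk j))" unfolding reg21_def
    by (rule convergentI, rule tendsto_add[OF tendsto_const s])
  show "convergent (\<lambda>j. reg22 (zk j))" unfolding reg22_def
    by (rule convergentI, rule tendsto_add[OF tendsto_minus[OF tendsto_add[OF tendsto_zk tendsto_const]] s])
qed

lemma tendsto_E_zk: "(\<lambda>j. E (zk j)) \<longlonglongrightarrow> E ck" "(\<lambda>j. Em (zk j)) \<longlonglongrightarrow> Em ck"
  unfolding E_def Em_def by (intro tendsto_intros tendsto_zk; simp)+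

lemma tendsto_Phi11_residue_0: "(\<lambda>j. (zk j - ck) * Phi11 (zk j)) \<longlonglongrightarrow> 0"
proof -
  have eq: "(zk j - ck) * Phi11 (zk j) = ema * (- 1 / complex_of_real hq) * E (zk j) * (\<i> * (complex_of_real (eps j) * cauchyT wx q (zk j + X)))" for j
    unfolding zk_minus_ck Phi11_def by (simp add: algebra_simps)
  have "(\<lambda>j. ema * (- 1 / complex_of_real hq) * E (zk j) * (\<i> * (complex_of_real (eps j) * cauchyT wx q (zk j + X)))) \<longlonglongrightarrow> ema * (- 1 / complex_of_real hq) * E ck * (\<i> * 0)"
    by (intro tendsto_intros tendsto_E_zk tendsto_eps_cauchyT_zk)
  then show ?thesis unfolding eq by simp
qed

lemma tendsto_Phi21_residue_0: "(\<lambda>j. (zk j - ck) * Phi21 (zk j)) \<longlonglongrightarrow> 0"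
proof -
  have eq: "(zk j - ck) * Phi21 (zk j) = ea / tpi * E (zk j) * (\<i> * (complex_of_real (eps j) * cauchyT wx p (zk j + X)))" for j
    unfolding zk_minus_ck Phi21_def by (simp add: algebra_simps)
  have "(\<lambda>j. ea / tpi * E (zk j) * (\<i> * (complex_of_real (eps j) * cauchyT wx p (zk j + X)))) \<longlonglongrightarrow> ea / tpi * E ck * (\<i> * 0)"
    by (intro tendsto_intros tendsto_E_zk tendsto_eps_cauchyT_zk)
  then show ?thesis unfolding eq by simp
qed

lemma tendsto_Phi12_zk: "(\<lambda>j. Phi12 (zk j)) \<longlonglongrightarrow> Phi12 ck" and tendsto_Phi22_zk: "(\<lambda>j. Phi22 (zk j)) \<longlonglongrightarrow> Phi22 ck"
  unfolding Phi12_def Phi22_def by (intro tendsto_intros tendsto_cpoly tendsto_zk tendsto_E_zk)+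

text \<open>Multiplied by \<open>z - c\<^sub>k\<close>, the left-hand sides of the \<open>(1,1)\<close> and \<open>(2,1)\<close> identities
  tend to \<open>res11\<close> and \<open>res21\<close> along \<open>zk\<close>, by the boundary values of the Cauchy transforms at the
  jump \<open>t\<^sub>k\<close>; the right-hand sides tend to the residue terms \<open>a\<^sub>k S\<close> and \<open>- a\<^sub>k b\<^sub>k S / y\<close>.\<close>

definition "res11 = ema * complex_of_real (omega * (poly q t * exp (- t\<^sup>2)) / hq) * E ck"
definition "res21 = - ea * complex_of_real (omega * (poly p t * exp (- t\<^sup>2))) / tpi * E ck"

lemma tendsto_residue_Phi11_ode: "(\<lambda>j. (zk j - ck) * (ema * (- (cauchyT2 wx q (zk j + X) + (zk j + X) * cauchyT wx q (zk j + X)) / complex_of_real hq) * E (zk j))) \<longlonglongrightarrow> res11"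
proof -
  have eq: "(zk j - ck) * (ema * (- (cauchyT2 wx q (zk j + X) + (zk j + X) * cauchyT wx q (zk j + X)) / complex_of_real hq) * E (zk j))
     = ema * (- (\<i> * (complex_of_real (eps j) * cauchyT2 wx q (zk j + X)) + (zk j + X) * (\<i> * (complex_of_real (eps j) * cauchyT wx q (zk j + X)))) / complex_of_real hq) * E (zk j)" for j
    unfolding zk_minus_ck by (simp add: algebra_simps)
  have "(\<lambda>j. ema * (- (\<i> * (complex_of_real (eps j) * cauchyT2 wx q (zk j + X)) + (zk j + X) * (\<i> * (complex_of_real (eps j) * cauchyT wx q (zk j + X)))) / complex_of_real hq) * E (zk j))
     \<longlonglongrightarrow> ema * (- (\<i> * (\<i> * complex_of_real (omega * (poly q t * exp (- t\<^sup>2)))) + (ck + X) * (\<i> * 0)) / complex_of_real hq) * E ck"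
    using hq_pos by (intro tendsto_mult[OF tendsto_mult[OF tendsto_const tendsto_divide[OF tendsto_minus[OF tendsto_add[OF
        tendsto_mult[OF tendsto_const tendsto_eps_cauchyT2_zk] tendsto_mult[OF tendsto_add[OF tendsto_zk tendsto_const] tendsto_mult[OF tendsto_const tendsto_eps_cauchyT_zk]]]] tendsto_const]] tendsto_E_zk(1)]) auto
  then show ?thesis unfolding eq res11_def by simp
qed

lemma tendsto_residue_Phi21_ode: "(\<lambda>j. (zk j - ck) * (ea * ((cauchyT2 wx p (zk j + X) + (zk j + X) * cauchyT wx p (zk j + X)) / tpi) * E (zk j))) \<longlonglongrightarrow> res21"
proof -
  have eq: "(zk j - ck) * (ea * ((cauchyT2 wx p (zk j + X) + (zk j + X) * cauchyT wx p (zk j + X)) / tpi) * E (zk j))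
     = ea * ((\<i> * (complex_of_real (eps j) * cauchyT2 wx p (zk j + X)) + (zk j + X) * (\<i> * (complex_of_real (eps j) * cauchyT wx p (zk j + X)))) / tpi) * E (zk j)" for j
    unfolding zk_minus_ck by (simp add: algebra_simps)
  have "(\<lambda>j. ea * ((\<i> * (complex_of_real (eps j) * cauchyT2 wx p (zk j + X)) + (zk j + X) * (\<i> * (complex_of_real (eps j) * cauchyT wx p (zk j + X)))) / tpi) * E (zk j))
     \<longlonglongrightarrow> ea * ((\<i> * (\<i> * complex_of_real (omega * (poly p t * exp (- t\<^sup>2)))) + (ck + X) * (\<i> * 0)) / tpi) * E ck"
    using tpi_nonzero by (intro tendsto_mult[OF tendsto_mult[OF tendsto_const tendsto_divide[OF tendsto_add[OF
        tendsto_mult[OF tendsto_const tendsto_eps_cauchyT2_zk] tendsto_mult[OF tendsto_add[OF tendsto_zk tendsto_const] tendsto_mult[OF tendsto_const tendsto_eps_cauchyT_zk]]] tendsto_const]] tendsto_E_zk(1)]) auto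
  then show ?thesis unfolding eq res21_def by simp
qed

definition "S j = b k * Phi11 (zk j) + y * Phi21 (zk j)" for j

lemma tendsto_a_S: "(\<lambda>j. a k * S j) \<longlonglongrightarrow> res11"
proof -
  have eq: "a k * S j = (zk j - ck) * (ema * (- (cauchyT2 wx q (zk j + X) + (zk j + X) * cauchyT wx q (zk j + X)) / complex_of_real hq) * E (zk j))
      - reg11 (zk j) * ((zk j - ck) * Phi11 (zk j)) - reg12 (zk j) * ((zk j - ck) * Phi21 (zk j))" for j
  proof -
    have "(zk j - ck) * (ema * (- (cauchyT2 wx q (zk j + X) + (zk j + X) * cauchyT wx q (zk j + X)) / complex_of_real hq) * E (zk j))
        = ((zk j - ck) * A11 (zk j)) * Phi11 (zk j) + ((zk j - ck) * A12 (zk j)) * Phi21 (zk j)"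
      unfolding Phi11_ode[OF Im_zk_nonzero] by (simp add: algebra_simps)
    also have "\<dots> = a k * S j + reg11 (zk j) * ((zk j - ck) * Phi11 (zk j)) + reg12 (zk j) * ((zk j - ck) * Phi21 (zk j))"
      unfolding A_split_pole[OF zk_neq_ck] S_def by (simp add: algebra_simps)
    finally show ?thesis by simp
  qed
  have "(\<lambda>j. (zk j - ck) * (ema * (- (cauchyT2 wx q (zk j + X) + (zk j + X) * cauchyT wx q (zk j + X)) / complex_of_real hq) * E (zk j))
      - reg11 (zk j) * ((zk j - ck) * Phi11 (zk j)) - reg12 (zk j) * ((zk j - ck) * Phi21 (zk j))) \<longlonglongrightarrow> res11 - 0 - 0"
    by (intro tendsto_diff tendsto_residue_Phi11_ode convergent_mult_tendsto_0 convergent_reg tendsto_Phi11_residue_0 tendsto_Phi21_residue_0)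
  then show ?thesis unfolding eq by simp
qed

lemma tendsto_ab_S: "(\<lambda>j. - (a k * b k / y) * S j) \<longlonglongrightarrow> res21"
proof -
  have eq: "- (a k * b k / y) * S j = (zk j - ck) * (ea * ((cauchyT2 wx p (zk j + X) + (zk j + X) * cauchyT wx p (zk j + X)) / tpi) * E (zk j))
      - reg21 (zk j) * ((zk j - ck) * Phi11 (zk j)) - reg22 (zk j) * ((zk j - ck) * Phi21 (zk j))" for j
  proof -
    have "(zk j - ck) * (ea * ((cauchyT2 wx p (zk j + X) + (zk j + X) * cauchyT wx p (zk j + X)) / tpi) * E (zk j))
        = ((zk j - ck) * A21 (zk j)) * Phi11 (zk j) + ((zk j - ck) * A22 (zk j)) * Phi21 (zk j)"
      unfolding Phi21_ode[OF Im_zk_nonzero] by (simp add: algebra_simps)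
    also have "\<dots> = - (a k * b k / y) * S j + reg21 (zk j) * ((zk j - ck) * Phi11 (zk j)) + reg22 (zk j) * ((zk j - ck) * Phi21 (zk j))"
      unfolding A_split_pole[OF zk_neq_ck] S_def using y_nonzero by (simp add: field_simps power2_eq_square)
    finally show ?thesis by simp
  qed
  have "(\<lambda>j. (zk j - ck) * (ea * ((cauchyT2 wx p (zk j + X) + (zk j + X) * cauchyT wx p (zk j + X)) / tpi) * E (zk j))
      - reg21 (zk j) * ((zk j - ck) * Phi11 (zk j)) - reg22 (zk j) * ((zk j - ck) * Phi21 (zk j))) \<longlonglongrightarrow> res21 - 0 - 0"
    by (intro tendsto_diff tendsto_residue_Phi21_ode convergent_mult_tendsto_0 convergent_reg tendsto_Phi11_residue_0 tendsto_Phi21_residue_0)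
  then show ?thesis unfolding eq by simp
qed

definition "v1 = Phi12 ck"
definition "v2 = Phi22 ck"

lemma tendsto_Phi12_ode_lhs: "(\<lambda>j. ema * (- tpi / complex_of_real hq) * (poly (pderiv (map_poly complex_of_real q)) (zk j + X) - (zk j + X) * cpoly q (zk j + X)) * Em (zk j))
   \<longlonglongrightarrow> ema * (- tpi / complex_of_real hq) * (poly (pderiv (map_poly complex_of_real q)) (ck + X) - (ck + X) * cpoly q (ck + X)) * Em ck"
  by (intro tendsto_intros tendsto_cpoly tendsto_zk tendsto_E_zk)

lemma tendsto_dist_mult_0: "(\<lambda>j. (zk j - ck) * f j) \<longlonglongrightarrow> 0" if "f \<longlonglongrightarrow> L" for f :: "nat \<Rightarrow> complex" and L
proof -
  have "(\<lambda>j. (zk j - ck) * f j) \<longlonglongrightarrow> (ck - ck) * L" by (intro tendsto_intros tendsto_zk that)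
  then show ?thesis by simp
qed

lemma a_mult_kernel_eq_0: "a k * (b k * v1 + y * v2) = 0"
proof -
  define LHS where "LHS j = ema * (- tpi / complex_of_real hq) * (poly (pderiv (map_poly complex_of_real q)) (zk j + X) - (zk j + X) * cpoly q (zk j + X)) * Em (zk j)" for j
  have eq: "(zk j - ck) * LHS j = a k * b k * Phi12 (zk j) + a k * y * Phi22 (zk j) + reg11 (zk j) * ((zk j - ck) * Phi12 (zk j)) + reg12 (zk j) * ((zk j - ck) * Phi22 (zk j))" for j
  proof -
    have "(zk j - ck) * LHS j = ((zk j - ck) * A11 (zk j)) * Phi12 (zk j) + ((zk j - ck) * A12 (zk j)) * Phi22 (zk j)"
      unfolding LHS_def Phi12_ode[OF Im_zk_nonzero] by (simp add: algebra_simps)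
    then show ?thesis unfolding A_split_pole[OF zk_neq_ck] by (simp add: algebra_simps)
  qed
  have l1: "(\<lambda>j. (zk j - ck) * LHS j) \<longlonglongrightarrow> 0" unfolding LHS_def by (rule tendsto_dist_mult_0[OF tendsto_Phi12_ode_lhs])
  have l2: "(\<lambda>j. a k * b k * Phi12 (zk j) + a k * y * Phi22 (zk j) + reg11 (zk j) * ((zk j - ck) * Phi12 (zk j)) + reg12 (zk j) * ((zk j - ck) * Phi22 (zk j)))
     \<longlonglongrightarrow> a k * b k * v1 + a k * y * v2 + 0 + 0"
    unfolding v1_def v2_def
    by (intro tendsto_add tendsto_mult tendsto_const tendsto_Phi12_zk tendsto_Phi22_zk convergent_mult_tendsto_0[OF convergent_reg(1) tendsto_dist_mult_0[OF tendsto_Phi12_zk]]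
        convergent_mult_tendsto_0[OF convergent_reg(2) tendsto_dist_mult_0[OF tendsto_Phi22_zk]])
  have "a k * b k * v1 + a k * y * v2 + 0 + 0 = 0" using LIMSEQ_unique[OF l2] l1 unfolding eq by blast
  then show ?thesis by (simp add: algebra_simps)
qed

lemma tendsto_diff_quotient_zk: assumes "(f has_field_derivative D) (at ck)"
  shows "(\<lambda>j. (f (zk j) - f ck) / (zk j - ck)) \<longlonglongrightarrow> D"
proof -
  have "((\<lambda>u. (f (ck + u) - f ck) / u) \<longlongrightarrow> D) (at 0)" using assms unfolding DERIV_def .
  moreover have "(\<lambda>j. zk j - ck) \<longlonglongrightarrow> 0" using tendsto_diff[OF tendsto_zk tendsto_const, of ck] by simp
  moreover have "\<forall>i. zk i - ck \<in> UNIV - {0}" using zk_neq_ck by simp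
  ultimately have "((\<lambda>u. (f (ck + u) - f ck) / u) \<circ> (\<lambda>j. zk j - ck)) \<longlonglongrightarrow> D"
    unfolding tendsto_at_iff_sequentially by (metis (no_types, lifting))
  then show ?thesis by (simp add: comp_def)
qed

lemma has_field_derivative_Phi22: "(Phi22 has_field_derivative (ea * poly (pderiv (map_poly complex_of_real p)) (z + X)) * Em z + (- (Em z * (z + X))) * (ea * cpoly p (z + X))) (at z)"
  unfolding Phi22_def[abs_def] by (rule DERIV_mult[OF DERIV_cmult[OF has_field_derivative_cpoly_shift] has_field_derivative_Em])

lemma has_field_derivative_Phi12: "(Phi12 has_field_derivative ema * (- tpi / complex_of_real hq * poly (pderiv (map_poly complex_of_real q)) (z + X)) * Em z + (- (Em z * (z + X))) * (ema * (- tpi / complex_of_real hq * cpoly q (z + X)))) (at z)"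
  unfolding Phi12_def[abs_def] by (rule DERIV_mult[OF DERIV_cmult[OF DERIV_cmult[OF has_field_derivative_cpoly_shift]] has_field_derivative_Em])

lemma tendsto_det_defect_0: "(\<lambda>j. Phi11 (zk j) * (Phi22 (zk j) - v2) - Phi21 (zk j) * (Phi12 (zk j) - v1)) \<longlonglongrightarrow> 0"
proof -
  have eq: "Phi11 (zk j) * (Phi22 (zk j) - v2) - Phi21 (zk j) * (Phi12 (zk j) - v1) =
     ((zk j - ck) * Phi11 (zk j)) * ((Phi22 (zk j) - Phi22 ck) / (zk j - ck)) - ((zk j - ck) * Phi21 (zk j)) * ((Phi12 (zk j) - Phi12 ck) / (zk j - ck))" for j
  proof -
    have u: "u \<noteq> 0 \<Longrightarrow> (u * A) * (B / u) = A * B" for u A B :: complex by simp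
    have nz: "zk j - ck \<noteq> 0" using zk_neq_ck[of j] by simp
    show ?thesis unfolding v1_def v2_def u[OF nz] ..
  qed
  from tendsto_diff[OF tendsto_mult[OF tendsto_Phi11_residue_0 tendsto_diff_quotient_zk[OF has_field_derivative_Phi22]] tendsto_mult[OF tendsto_Phi21_residue_0 tendsto_diff_quotient_zk[OF has_field_derivative_Phi12]]]
  show ?thesis unfolding eq by simp
qed

lemma residues_eq_0_if_a_eq_0: "a k = 0 \<Longrightarrow> res11 = 0 \<and> res21 = 0"
  using LIMSEQ_unique[OF tendsto_a_S] LIMSEQ_unique[OF tendsto_ab_S] by simp

text \<open>Here \<open>det \<Phi> = 1\<close> enters: the kernel relation turns \<open>v1 * S\<close> into \<open>- y det \<Phi>\<close>
  up to a term that vanishes at \<open>c\<^sub>k\<close>.\<close>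

lemma tendsto_v1_S:
  assumes "a k \<noteq> 0"
  shows "(\<lambda>j. v1 * S j) \<longlonglongrightarrow> - y"
proof -
  have bv: "b k * v1 = - (y * v2)"
    using a_mult_kernel_eq_0 assms by (simp add: eq_neg_iff_add_eq_0)
  have "v1 * S j = - y * (Phi11 (zk j) * Phi22 (zk j) - Phi12 (zk j) * Phi21 (zk j))
      + y * (Phi11 (zk j) * (Phi22 (zk j) - v2) - Phi21 (zk j) * (Phi12 (zk j) - v1))" for j
  proof -
    have "v1 * S j = (b k * v1) * Phi11 (zk j) + y * v1 * Phi21 (zk j)"
      unfolding S_def by (simp add: algebra_simps)
    then show ?thesis unfolding bv by (simp add: algebra_simps)
  qed
  moreover have "(\<lambda>j. - y * (Phi11 (zk j) * Phi22 (zk j) - Phi12 (zk j) * Phi21 (zk j))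
      + y * (Phi11 (zk j) * (Phi22 (zk j) - v2) - Phi21 (zk j) * (Phi12 (zk j) - v1))) \<longlonglongrightarrow> - y * 1 + y * 0"
    using det_Phi_eq_1[OF zk_pos] by (intro tendsto_intros tendsto_det_defect_0) simp
  ultimately show ?thesis by simp
qed

lemma residue_relations: "a k * y = - (v1 * res11) \<and> a k * b k = v1 * res21"
proof (cases "a k = 0")
  case False
  have "(\<lambda>j. a k * (v1 * S j)) \<longlonglongrightarrow> a k * (- y)"
    using tendsto_v1_S[OF False] by (intro tendsto_intros)
  moreover have "(\<lambda>j. a k * (v1 * S j)) \<longlonglongrightarrow> v1 * res11"
    using tendsto_mult[OF tendsto_const tendsto_a_S, of v1] by (simp add: algebra_simps)
  ultimately have a_res: "a k * (- y) = v1 * res11" by (rule LIMSEQ_unique)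
  have "(\<lambda>j. - (a k * b k / y) * (v1 * S j)) \<longlonglongrightarrow> - (a k * b k / y) * (- y)"
    using tendsto_v1_S[OF False] by (intro tendsto_intros)
  moreover have "(\<lambda>j. - (a k * b k / y) * (v1 * S j)) \<longlonglongrightarrow> v1 * res21"
    using tendsto_mult[OF tendsto_const tendsto_ab_S, of v1] by (simp add: algebra_simps)
  ultimately have "- (a k * b k / y) * (- y) = v1 * res21" by (rule LIMSEQ_unique)
  then show ?thesis using a_res y_nonzero by (simp add: minus_equation_iff[of "a k * y"])
qed (use residues_eq_0_if_a_eq_0 in simp)

definition "gauss_t = exp (- t\<^sup>2)"

lemma RR_n_eq: "RR m c wh x n k = omega * gauss_t * (poly p t)\<^sup>2 / hp"
  unfolding RR_def Let_def omega_def gauss_t_def p_def hp_def t_def ..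
lemma RR_pred_n_eq: "RR m c wh x (n - 1) k = omega * gauss_t * (poly q t)\<^sup>2 / hq"
  unfolding RR_def Let_def omega_def gauss_t_def q_def hq_def t_def ..
lemma rr_n_eq: "rr m c wh x n k = omega * gauss_t * poly p t * poly q t / hq"
  unfolding rr_def Let_def omega_def gauss_t_def p_def q_def hq_def t_def ..

lemma E_ck: "E ck = complex_of_real (exp (t\<^sup>2 / 2))" and Em_ck: "Em ck = complex_of_real (inverse (exp (t\<^sup>2 / 2)))"
  unfolding E_def Em_def ck_plus_X by (simp_all add: exp_of_real[symmetric] exp_minus[symmetric])

lemma ema_inv: "ema = complex_of_real (inverse (exp (x\<^sup>2 / 2)))"
  unfolding ema_def by (simp add: exp_minus)

lemma exp_minus_t_square: "exp (- t\<^sup>2) = inverse (exp (t\<^sup>2 / 2)) * inverse (exp (t\<^sup>2 / 2))"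
  by (simp add: exp_minus[symmetric] exp_add[symmetric])

lemma v1_eq: "v1 = complex_of_real (inverse (exp (x\<^sup>2 / 2))) * (- tpi / complex_of_real hq * complex_of_real (poly q t)) * complex_of_real (inverse (exp (t\<^sup>2 / 2)))"
  unfolding v1_def Phi12_def ck_plus_X cpoly_of_real ema_inv[symmetric] Em_ck[symmetric] ck_plus_X ..

lemma a_eq: "a k = complex_of_real (RR m c wh x (n - 1) k / 2)"
proof -
  have "a k = - (v1 * res11) / y" using residue_relations y_nonzero by (metis nonzero_mult_div_cancel_right)
  also have "\<dots> = complex_of_real (omega * gauss_t * (poly q t)\<^sup>2 / hq / 2)"
    unfolding v1_eq res11_def y_eq E_ck ema_inv ea_def tpi_def gauss_t_def exp_minus_t_square using hq_pos
    by (simp add: field_simps power2_eq_square)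
  finally show ?thesis unfolding RR_pred_n_eq by simp
qed

lemma ab_eq: "a k * b k = complex_of_real (rr m c wh x n k)"
proof -
  have "a k * b k = v1 * res21" using residue_relations by blast
  also have "\<dots> = complex_of_real (omega * gauss_t * poly p t * poly q t / hq)"
    unfolding v1_eq res21_def E_ck ema_inv ea_def tpi_def gauss_t_def exp_minus_t_square using hq_pos
    by (simp add: field_simps power2_eq_square)
  finally show ?thesis unfolding rr_n_eq .
qed

lemma RR_n_eq_0_if_a_eq_0: "a k = 0 \<Longrightarrow> RR m c wh x n k = 0"
proof -
  assume "a k = 0"
  then have "res21 = 0" using residues_eq_0_if_a_eq_0 by blast
  then have "omega * (poly p t * exp (- t\<^sup>2)) = 0"
    unfolding res21_def E_ck ea_def tpi_def by simp
  then show ?thesis unfolding RR_n_eq gauss_t_def by (auto simp: power2_eq_square)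
qed

end

context lax_system_at_jump
begin

lemma b_eq: "a k \<noteq> 0 \<Longrightarrow> b k = complex_of_real (rr m c wh x n k / (RR m c wh x (n - 1) k / 2))"
  using ab_eq a_eq by (metis nonzero_mult_div_cancel_left of_real_divide)

lemma RR_pred_n_nonzero_iff: "RR m c wh x (n - 1) k \<noteq> 0 \<longleftrightarrow> omega \<noteq> 0 \<and> poly q t \<noteq> 0"
  using hq_pos unfolding RR_pred_n_eq gauss_t_def by simp

lemma RR_n_eq_a_b: "complex_of_real (RR m c wh x n k) = a k * (b k)\<^sup>2 / (sum_ab + of_nat n)"
proof (cases "a k = 0")
  case False
  then have "omega \<noteq> 0" "poly q t \<noteq> 0"
    using a_eq RR_pred_n_nonzero_iff by auto
  have "a k * (b k)\<^sup>2 / (sum_ab + of_nat n) = complex_of_real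
      (RR m c wh x (n - 1) k / 2 * (rr m c wh x n k / (RR m c wh x (n - 1) k / 2))\<^sup>2 / (2 * hp / hq))"
    unfolding b_eq[OF False] a_eq sum_ab_plus_n_eq by simp
  also have "\<dots> = complex_of_real (RR m c wh x n k)"
    using \<open>omega \<noteq> 0\<close> \<open>poly q t \<noteq> 0\<close> hq_pos hp_pos unfolding rr_n_eq RR_n_eq RR_pred_n_eq gauss_t_def
    by (simp add: field_simps power2_eq_square)
  finally show ?thesis ..
qed (use RR_n_eq_0_if_a_eq_0 in simp)

end

context lax_system
begin

lemma sum_ab_eq_sum_rr: "sum_ab = complex_of_real (\<Sum>j=1..m. rr m c wh x n j)"
proof -
  have "a j * b j = complex_of_real (rr m c wh x n j)" if "j \<in> {1..m}" for j
  proof -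
    interpret lax_system_at_jump m c wh x n y a b j
      using that by unfold_locales auto
    show ?thesis by (rule ab_eq)
  qed
  then show ?thesis unfolding sum_ab_def of_real_sum by (rule sum.cong[OF refl])
qed

lemma sum_rr_plus_n_eq: "(\<Sum>j=1..m. rr m c wh x n j) + real n = 2 * hp / hq"
proof -
  have "complex_of_real ((\<Sum>j=1..m. rr m c wh x n j) + real n) = complex_of_real (2 * hp / hq)"
    using sum_ab_plus_n_eq unfolding sum_ab_eq_sum_rr by simp
  then show ?thesis by (simp only: of_real_eq_iff)
qed

end

context lax_system_at_jump
begin

lemma a_b_eq_RR_rr:
  assumes "RR m c wh x n k \<noteq> 0" "rr m c wh x n k \<noteq> 0"
  shows "a k = complex_of_real ((rr m c wh x n k)\<^sup>2 / (RR m c wh x n k * ((\<Sum>j=1..m. rr m c wh x n j) + real n)))"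
    and "b k = complex_of_real (RR m c wh x n k / rr m c wh x n k * ((\<Sum>j=1..m. rr m c wh x n j) + real n))"
proof -
  have "a k \<noteq> 0" using ab_eq assms(2) by auto
  then have "omega \<noteq> 0" "poly q t \<noteq> 0"
    using a_eq RR_pred_n_nonzero_iff by auto
  moreover have "poly p t \<noteq> 0" using assms(2) unfolding rr_n_eq by auto
  ultimately show "a k = complex_of_real ((rr m c wh x n k)\<^sup>2 / (RR m c wh x n k * ((\<Sum>j=1..m. rr m c wh x n j) + real n)))"
    and "b k = complex_of_real (RR m c wh x n k / rr m c wh x n k * ((\<Sum>j=1..m. rr m c wh x n j) + real n))"
    using hq_pos hp_pos unfolding b_eq[OF \<open>a k \<noteq> 0\<close>] a_eq sum_rr_plus_n_eq of_real_eq_iff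
    unfolding rr_n_eq RR_n_eq RR_pred_n_eq gauss_t_def by (simp_all add: field_simps power2_eq_square)
qed

end

theorem theorem5p4:
  fixes m n :: nat and c wh :: "nat \<Rightarrow> real"
    and y :: "real \<Rightarrow> complex" and a b :: "real \<Rightarrow> nat \<Rightarrow> complex"
    and x :: real and k :: nat
  assumes m: "m \<ge> 1" and n: "n \<ge> 1"
    and c1: "c 1 = 0"
    and cmono: "\<And>i j. 1 \<le> i \<Longrightarrow> i < j \<Longrightarrow> j \<le> m \<Longrightarrow> c i < c j"
    and wh0: "wh 0 = 1"
    and whpos: "\<And>i. 1 \<le> i \<Longrightarrow> i \<le> m \<Longrightarrow> wh i \<ge> 0"
    and ynz: "\<And>x. y x \<noteq> 0"
    and lax: "\<And>x z. Im z \<noteq> 0 \<Longrightarrow> \<forall>i j.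
        ((\<lambda>\<zeta>. Phi m c wh n \<zeta> x $ i $ j) has_field_derivative
           (Alax m c n (y x) (a x) (b x) z x ** Phi m c wh n z x) $ i $ j) (at z)"
    and k: "1 \<le> k" "k \<le> m"
  shows "complex_of_real (RR m c wh x n k) =
           a x k * (b x k)\<^sup>2 / ((\<Sum>j=1..m. a x j * b x j) + of_nat n) \<and>
         complex_of_real (rr m c wh x n k) = a x k * b x k \<and>
         (RR m c wh x n k \<noteq> 0 \<and> rr m c wh x n k \<noteq> 0 \<and>
           (\<Sum>j=1..m. rr m c wh x n j) + real n \<noteq> 0 \<longrightarrow>
         a x k = complex_of_real ((rr m c wh x n k)\<^sup>2 /
                   (RR m c wh x n k * ((\<Sum>j=1..m. rr m c wh x n j) + real n))) \<and>
         b x k = complex_of_real (RR m c wh x n k / rr m c wh x n k *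
                   ((\<Sum>j=1..m. rr m c wh x n j) + real n))) \<and>
         a x k = complex_of_real (RR m c wh x (n - 1) k / 2)"
proof -
  interpret lax_system_at_jump m c wh x n "y x" "a x" "b x" k
    by unfold_locales (use n c1 cmono wh0 whpos ynz lax k in auto)
  have "complex_of_real (RR m c wh x n k) = a x k * (b x k)\<^sup>2 / ((\<Sum>j=1..m. a x j * b x j) + of_nat n)"
    using RR_n_eq_a_b unfolding sum_ab_def .
  moreover have "complex_of_real (rr m c wh x n k) = a x k * b x k"
    using ab_eq by (rule sym)
  ultimately show ?thesis
    using a_b_eq_RR_rr a_eq by blast
qed

end
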